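(* The assignment $\mathbf{I}:\underline{\mathrm{G}}\to\underline{\mathrm{IN}}$ sending a globally hyperbolic poset $(X,\le)$ to $(\mathbf{I}X,\mathrm{left},\mathrm{right})$, and a morphism $f:X\to Y$ to $\bar f:\mathbf{I}X\to\mathbf{I}Y$, $\bar f([a,b])=[f(a),f(b)]$, is a functor.
   Context: Order notions: directed/filtered sets, suprema $\bigsqcup$, infima $\bigwedge$, the way-below relation $x\ll y$ (for every directed $S$ with a supremum, $y\sqsubseteq\bigsqcup S$ implies $x\sqsubseteq s$ for some $s\in S$), $\Uparrow x=\{a:x\ll a\}$, $\Downarrow x=\{a:a\ll x\}$; a poset is continuous if some subset $B$ has $B\cap\Downarrow x$ containing a directed set with supremum $x$ for every $x$; a continuous dcpo additionally has suprema of all directed sets; $\max(D)$ is the set of maximal elements; the Scott topology consists of upper sets $U$ with $\bigsqcup S\in U\Rightarrow S\cap U\neq\emptyset$ for directed $S$. A continuous poset is bicontinuous if (1) $x\ll y$ iff for every filtered $S$ with an infimum, $\bigwedge S\sqsubseteq x$ implies $s\sqsubseteq y$ for some $s\in S$, and (2) each $\Uparrow x$ is filtered with infimum $x$; its interval topology has basis $\{z: a\ll z\ll b\}$. A globally hyperbolic poset is a bicontinuous poset $(X,\le)$ whose closed intervals $[a,b]=\{z:a\le z\le b\}$ are compact in the interval topology. $\underline{\mathrm{G}}$ is the category whose objects are globally hyperbolic posets and whose arrows are monotone maps continuous for the interval topologies. For such $X$, $\mathbf{I}X=\{[a,b]: a\le b\}$ ordered by reverse inclusion, with $\mathrm{left}([a,b])=[a,a]$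 and $\mathrm{right}([a,b])=[b,b]$. An interval poset is a poset $D$ with maps $\mathrm{left},\mathrm{right}:D\to\max(D)$ such that (writing $\sqcap$ for binary infimum, assumed to exist only where named) $x=\mathrm{left}(x)\sqcap\mathrm{right}(x)$; if $\mathrm{right}(x)=\mathrm{left}(y)$ then $\mathrm{left}(x\sqcap y)=\mathrm{left}(x)$, $\mathrm{right}(x\sqcap y)=\mathrm{right}(y)$; and for $p\in\max(D)$ with $x\sqsubseteq p$, $\mathrm{left}(\mathrm{left}(x)\sqcap p)=\mathrm{left}(x)$, $\mathrm{right}(\mathrm{left}(x)\sqcap p)=p$, $\mathrm{left}(p\sqcap\mathrm{right}(x))=p$, $\mathrm{right}(p\sqcap\mathrm{right}(x))=\mathrm{right}(x)$. Define $a\le b$ on $\max(D)$ iff $a=\mathrm{left}(z),b=\mathrm{right}(z)$ for some $z$; let $[p,\cdot]=\mathrm{left}^{-1}(p)$, $[\cdot,q]=\mathrm{right}^{-1}(q)$. An interval domain is an interval poset with $D$ a continuous dcpo such that: (i) if $p\in\Uparrow x\cap\max(D)$ then $\Uparrow(\mathrm{left}(x)\sqcap p)$ and $\Uparrow(p\sqcap\mathrm{right}(x))$ are nonempty; (ii) for each $x$, TFAE: $\Uparrow x\neq\emptyset$; for all $y\in[\mathrm{left}(x),\cdot]$ with $y\sqsubseteq x$, $y\ll\mathrm{right}(y)$ in the subposet $[\cdot,\mathrm{right}(y)]$; for all $y\in[\cdot,\mathrm{right}(x)]$ with $y\sqsubseteq x$, $y\ll\mathrm{left}(y)$ in the subposet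 $[\mathrm{left}(y),\cdot]$; (iii) for directed $S\subseteq[p,\cdot]$, $\mathrm{left}(\bigsqcup S)=p$ and $\mathrm{right}(\bigsqcup S)=\mathrm{right}(\bigsqcup T)$ for every directed $T\subseteq[q,\cdot]$ with $\mathrm{right}(T)=\mathrm{right}(S)$, and dually for directed $S\subseteq[\cdot,q]$, $\mathrm{right}(\bigsqcup S)=q$ and $\mathrm{left}(\bigsqcup S)=\mathrm{left}(\bigsqcup T)$ for every directed $T\subseteq[\cdot,p]$ with $\mathrm{left}(T)=\mathrm{left}(S)$; (iv) each $\{y\in\max(D):x\sqsubseteq y\}$ is Scott compact. $\underline{\mathrm{IN}}$ is the category of interval domains with arrows the Scott continuous maps $f:D\to E$ satisfying $f\circ\mathrm{left}_D=\mathrm{left}_E\circ f$ and $f\circ\mathrm{right}_D=\mathrm{right}_E\circ f$. *)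

theory Defs
  imports Main
begin

definition is_poset :: "'a set \<Rightarrow> ('a \<Rightarrow> 'a \<Rightarrow> bool) \<Rightarrow> bool" where
  "is_poset D le \<longleftrightarrow> (\<forall>x\<in>D. le x x) \<and>
     (\<forall>x\<in>D. \<forall>y\<in>D. le x y \<and> le y x \<longrightarrow> x = y) \<and>
     (\<forall>x\<in>D. \<forall>y\<in>D. \<forall>z\<in>D. le x y \<and> le y z \<longrightarrow> le x z)"

definition directed :: "'a set \<Rightarrow> ('a \<Rightarrow> 'a \<Rightarrow> bool) \<Rightarrow> 'a set \<Rightarrow> bool" where
  "directed D le S \<longleftrightarrow> S \<subseteq> D \<and> S \<noteq> {} \<and>
     (\<forall>x\<in>S. \<forall>y\<in>S. \<exists>z\<in>S. le x z \<and> le y z)"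

definition filtered :: "'a set \<Rightarrow> ('a \<Rightarrow> 'a \<Rightarrow> bool) \<Rightarrow> 'a set \<Rightarrow> bool" where
  "filtered D le S \<longleftrightarrow> S \<subseteq> D \<and> S \<noteq> {} \<and>
     (\<forall>x\<in>S. \<forall>y\<in>S. \<exists>z\<in>S. le z x \<and> le z y)"

definition is_sup :: "'a set \<Rightarrow> ('a \<Rightarrow> 'a \<Rightarrow> bool) \<Rightarrow> 'a set \<Rightarrow> 'a \<Rightarrow> bool" where
  "is_sup D le S s \<longleftrightarrow> s \<in> D \<and> (\<forall>x\<in>S. le x s) \<and>
     (\<forall>u\<in>D. (\<forall>x\<in>S. le x u) \<longrightarrow> le s u)"

definition is_inf :: "'a set \<Rightarrow> ('a \<Rightarrow> 'a \<Rightarrow> bool) \<Rightarrow> 'a set \<Rightarrow> 'a \<Rightarrow> bool" where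
  "is_inf D le S s \<longleftrightarrow> s \<in> D \<and> (\<forall>x\<in>S. le s x) \<and>
     (\<forall>u\<in>D. (\<forall>x\<in>S. le u x) \<longrightarrow> le u s)"

definition way_below :: "'a set \<Rightarrow> ('a \<Rightarrow> 'a \<Rightarrow> bool) \<Rightarrow> 'a \<Rightarrow> 'a \<Rightarrow> bool" where
  "way_below D le x y \<longleftrightarrow> (\<forall>S. directed D le S \<and> (\<exists>s. is_sup D le S s \<and> le y s)
        \<longrightarrow> (\<exists>s\<in>S. le x s))"

definition wb_up :: "'a set \<Rightarrow> ('a \<Rightarrow> 'a \<Rightarrow> bool) \<Rightarrow> 'a \<Rightarrow> 'a set" where
  "wb_up D le x = {a\<in>D. way_below D le x a}"

definition wb_down :: "'a set \<Rightarrow> ('a \<Rightarrow> 'a \<Rightarrow> bool) \<Rightarrow> 'a \<Rightarrow> 'a set" where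
  "wb_down D le x = {a\<in>D. way_below D le a x}"

definition continuous_poset :: "'a set \<Rightarrow> ('a \<Rightarrow> 'a \<Rightarrow> bool) \<Rightarrow> bool" where
  "continuous_poset D le \<longleftrightarrow> is_poset D le \<and>
     (\<exists>B\<subseteq>D. \<forall>x\<in>D. \<exists>S. S \<subseteq> B \<inter> wb_down D le x \<and> directed D le S \<and> is_sup D le S x)"

definition is_dcpo :: "'a set \<Rightarrow> ('a \<Rightarrow> 'a \<Rightarrow> bool) \<Rightarrow> bool" where
  "is_dcpo D le \<longleftrightarrow> (\<forall>S. directed D le S \<longrightarrow> (\<exists>s. is_sup D le S s))"

definition continuous_dcpo :: "'a set \<Rightarrow> ('a \<Rightarrow> 'a \<Rightarrow> bool) \<Rightarrow> bool" where
  "continuous_dcpo D le \<longleftrightarrow> continuous_poset D le \<and> is_dcpo D le"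

definition maxs :: "'a set \<Rightarrow> ('a \<Rightarrow> 'a \<Rightarrow> bool) \<Rightarrow> 'a set" where
  "maxs D le = {x\<in>D. \<forall>y\<in>D. le x y \<longrightarrow> y = x}"

definition scott_open :: "'a set \<Rightarrow> ('a \<Rightarrow> 'a \<Rightarrow> bool) \<Rightarrow> 'a set \<Rightarrow> bool" where
  "scott_open D le U \<longleftrightarrow> U \<subseteq> D \<and> (\<forall>x\<in>U. \<forall>y\<in>D. le x y \<longrightarrow> y \<in> U) \<and>
     (\<forall>S s. directed D le S \<and> is_sup D le S s \<and> s \<in> U \<longrightarrow> S \<inter> U \<noteq> {})"

definition compact_wrt :: "('a set \<Rightarrow> bool) \<Rightarrow> 'a set \<Rightarrow> bool" where
  "compact_wrt opn K \<longleftrightarrow> (\<forall>\<U>. (\<forall>U\<in>\<U>. opn U) \<and> K \<subseteq> \<Union>\<U> \<longrightarrow>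
       (\<exists>\<F>\<subseteq>\<U>. finite \<F> \<and> K \<subseteq> \<Union>\<F>))"

definition bicontinuous :: "'a set \<Rightarrow> ('a \<Rightarrow> 'a \<Rightarrow> bool) \<Rightarrow> bool" where
  "bicontinuous D le \<longleftrightarrow> continuous_poset D le \<and>
     (\<forall>x\<in>D. \<forall>y\<in>D. way_below D le x y \<longleftrightarrow>
        (\<forall>S. filtered D le S \<and> (\<exists>i. is_inf D le S i \<and> le i x) \<longrightarrow> (\<exists>s\<in>S. le s y))) \<and>
     (\<forall>x\<in>D. filtered D le (wb_up D le x) \<and> is_inf D le (wb_up D le x) x)"

definition interval_open :: "'a set \<Rightarrow> ('a \<Rightarrow> 'a \<Rightarrow> bool) \<Rightarrow> 'a set \<Rightarrow> bool" where
  "interval_open D le U \<longleftrightarrow> U \<subseteq> D \<and> (\<forall>x\<in>U. \<exists>a\<in>D. \<exists>b\<in>D.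
      way_below D le a x \<and> way_below D le x b \<and>
      {z\<in>D. way_below D le a z \<and> way_below D le z b} \<subseteq> U)"

definition cint :: "'a set \<Rightarrow> ('a \<Rightarrow> 'a \<Rightarrow> bool) \<Rightarrow> 'a \<Rightarrow> 'a \<Rightarrow> 'a set" where
  "cint X le a b = {z\<in>X. le a z \<and> le z b}"

definition globally_hyperbolic :: "'a set \<Rightarrow> ('a \<Rightarrow> 'a \<Rightarrow> bool) \<Rightarrow> bool" where
  "globally_hyperbolic X le \<longleftrightarrow> bicontinuous X le \<and>
     (\<forall>a\<in>X. \<forall>b\<in>X. le a b \<longrightarrow> compact_wrt (interval_open X le) (cint X le a b))"

definition G_arrow :: "'a set \<Rightarrow> ('a \<Rightarrow> 'a \<Rightarrow> bool) \<Rightarrow> 'b set \<Rightarrow> ('b \<Rightarrow> 'b \<Rightarrow> bool)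
    \<Rightarrow> ('a \<Rightarrow> 'b) \<Rightarrow> bool" where
  "G_arrow X leX Y leY f \<longleftrightarrow> f ` X \<subseteq> Y \<and>
     (\<forall>x\<in>X. \<forall>y\<in>X. leX x y \<longrightarrow> leY (f x) (f y)) \<and>
     (\<forall>U. interval_open Y leY U \<longrightarrow> interval_open X leX {x\<in>X. f x \<in> U})"

definition scott_continuous :: "'a set \<Rightarrow> ('a \<Rightarrow> 'a \<Rightarrow> bool) \<Rightarrow> 'b set \<Rightarrow> ('b \<Rightarrow> 'b \<Rightarrow> bool)
    \<Rightarrow> ('a \<Rightarrow> 'b) \<Rightarrow> bool" where
  "scott_continuous D leD E leE f \<longleftrightarrow> f ` D \<subseteq> E \<and>
     (\<forall>U. scott_open E leE U \<longrightarrow> scott_open D leD {x\<in>D. f x \<in> U})"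

definition interval_poset :: "'a set \<Rightarrow> ('a \<Rightarrow> 'a \<Rightarrow> bool) \<Rightarrow> ('a \<Rightarrow> 'a) \<Rightarrow> ('a \<Rightarrow> 'a) \<Rightarrow> bool" where
  "interval_poset D le lft rgt \<longleftrightarrow> is_poset D le \<and>
     (\<forall>x\<in>D. lft x \<in> maxs D le \<and> rgt x \<in> maxs D le) \<and>
     (\<forall>x\<in>D. is_inf D le {lft x, rgt x} x) \<and>
     (\<forall>x\<in>D. \<forall>y\<in>D. rgt x = lft y \<longrightarrow>
        (\<exists>m. is_inf D le {x, y} m \<and> lft m = lft x \<and> rgt m = rgt y)) \<and>
     (\<forall>x\<in>D. \<forall>p\<in>maxs D le. le x p \<longrightarrow>
        (\<exists>m. is_inf D le {lft x, p} m \<and> lft m = lft x \<and> rgt m = p) \<and>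
        (\<exists>m. is_inf D le {p, rgt x} m \<and> lft m = p \<and> rgt m = rgt x))"

definition interval_domain :: "'a set \<Rightarrow> ('a \<Rightarrow> 'a \<Rightarrow> bool) \<Rightarrow> ('a \<Rightarrow> 'a) \<Rightarrow> ('a \<Rightarrow> 'a) \<Rightarrow> bool" where
  "interval_domain D le lft rgt \<longleftrightarrow> interval_poset D le lft rgt \<and> continuous_dcpo D le \<and>
     \<comment> \<open>(i)\<close>
     (\<forall>x\<in>D. \<forall>p\<in>wb_up D le x \<inter> maxs D le.
        (\<forall>m. is_inf D le {lft x, p} m \<longrightarrow> wb_up D le m \<noteq> {}) \<and>
        (\<forall>m. is_inf D le {p, rgt x} m \<longrightarrow> wb_up D le m \<noteq> {})) \<and>
     \<comment> \<open>(ii)\<close>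
     (\<forall>x\<in>D.
        (wb_up D le x \<noteq> {} \<longleftrightarrow>
          (\<forall>y\<in>D. lft y = lft x \<and> le y x \<longrightarrow>
             way_below {z\<in>D. rgt z = rgt y} le y (rgt y))) \<and>
        (wb_up D le x \<noteq> {} \<longleftrightarrow>
          (\<forall>y\<in>D. rgt y = rgt x \<and> le y x \<longrightarrow>
             way_below {z\<in>D. lft z = lft y} le y (lft y)))) \<and>
     \<comment> \<open>(iii)\<close>
     (\<forall>p S s. directed D le S \<and> S \<subseteq> {z\<in>D. lft z = p} \<and> is_sup D le S s \<longrightarrow>
        lft s = p \<and>
        (\<forall>q T t. directed D le T \<and> T \<subseteq> {z\<in>D. lft z = q} \<and> is_sup D le T t \<and>
                 rgt ` T = rgt ` S \<longrightarrow> rgt t = rgt s)) \<and>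
     (\<forall>q S s. directed D le S \<and> S \<subseteq> {z\<in>D. rgt z = q} \<and> is_sup D le S s \<longrightarrow>
        rgt s = q \<and>
        (\<forall>p T t. directed D le T \<and> T \<subseteq> {z\<in>D. rgt z = p} \<and> is_sup D le T t \<and>
                 lft ` T = lft ` S \<longrightarrow> lft t = lft s)) \<and>
     \<comment> \<open>(iv)\<close>
     (\<forall>x\<in>D. compact_wrt (scott_open D le) {y\<in>maxs D le. le x y})"

definition IN_arrow :: "'a set \<Rightarrow> ('a \<Rightarrow> 'a \<Rightarrow> bool) \<Rightarrow> ('a \<Rightarrow> 'a) \<Rightarrow> ('a \<Rightarrow> 'a) \<Rightarrow>
    'b set \<Rightarrow> ('b \<Rightarrow> 'b \<Rightarrow> bool) \<Rightarrow> ('b \<Rightarrow> 'b) \<Rightarrow> ('b \<Rightarrow> 'b) \<Rightarrow> ('a \<Rightarrow> 'b) \<Rightarrow> bool" where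
  "IN_arrow D leD lD rD E leE lE rE f \<longleftrightarrow> scott_continuous D leD E leE f \<and>
     (\<forall>x\<in>D. f (lD x) = lE (f x) \<and> f (rD x) = rE (f x))"

definition IX :: "'a set \<Rightarrow> ('a \<Rightarrow> 'a \<Rightarrow> bool) \<Rightarrow> 'a set set" where
  "IX X le = {cint X le a b | a b. a \<in> X \<and> b \<in> X \<and> le a b}"

definition IX_le :: "'a set \<Rightarrow> 'a set \<Rightarrow> bool" where
  "IX_le S T \<longleftrightarrow> T \<subseteq> S"

definition ilo :: "'a set \<Rightarrow> ('a \<Rightarrow> 'a \<Rightarrow> bool) \<Rightarrow> 'a set \<Rightarrow> 'a" where
  "ilo X le S = (THE a. a \<in> X \<and> (\<exists>b\<in>X. le a b \<and> S = cint X le a b))"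

definition ihi :: "'a set \<Rightarrow> ('a \<Rightarrow> 'a \<Rightarrow> bool) \<Rightarrow> 'a set \<Rightarrow> 'a" where
  "ihi X le S = (THE b. b \<in> X \<and> (\<exists>a\<in>X. le a b \<and> S = cint X le a b))"

definition ileft :: "'a set \<Rightarrow> ('a \<Rightarrow> 'a \<Rightarrow> bool) \<Rightarrow> 'a set \<Rightarrow> 'a set" where
  "ileft X le S = cint X le (ilo X le S) (ilo X le S)"

definition iright :: "'a set \<Rightarrow> ('a \<Rightarrow> 'a \<Rightarrow> bool) \<Rightarrow> 'a set \<Rightarrow> 'a set" where
  "iright X le S = cint X le (ihi X le S) (ihi X le S)"

definition Imap :: "'a set \<Rightarrow> ('a \<Rightarrow> 'a \<Rightarrow> bool) \<Rightarrow> 'b set \<Rightarrow> ('b \<Rightarrow> 'b \<Rightarrow> bool)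
    \<Rightarrow> ('a \<Rightarrow> 'b) \<Rightarrow> 'a set \<Rightarrow> 'b set" where
  "Imap X leX Y leY f S = cint Y leY (f (ilo X leX S)) (f (ihi X leX S))"

end

theory Submission
  imports Defs
begin

(*
  An interval [a,b] of a globally hyperbolic poset is determined by its endpoints, and
  [a,b] \<sqsubseteq> [c,d] iff a \<le> c and d \<le> b.  Compactness of closed intervals in the interval
  topology gives every bounded directed set a supremum: a cluster point of the net, which the
  interval-open complements of principal up- and down-sets force to be the least upper bound.
  Hence the supremum of a directed family of intervals is [sup of left ends, inf of right ends],
  and [a,b] \<ll> [c,d] whenever a \<ll> c and d \<ll> b; such intervals approximate [c,d], and the
  interval-domain axioms reduce to properties of \<ll> on X such as interpolation.  Interval
  continuity, applied to the complements of principal down-sets, shows that morphisms preserve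
  directed suprema and filtered infima, which makes [a,b] \<mapsto> [f a, f b] Scott continuous.
  Bicontinuity makes everything self-dual, so facts about right endpoints and infima follow
  from those about left endpoints and suprema for the converse order.
*)

section \<open>Directed sets, suprema and infima\<close>

lemma directedD:
  assumes "directed D le S"
  shows "S \<subseteq> D" "S \<noteq> {}" "x \<in> S \<Longrightarrow> y \<in> S \<Longrightarrow> \<exists>z\<in>S. le x z \<and> le y z"
  using assms unfolding directed_def by blast+

lemma filteredD:
  assumes "filtered D le S"
  shows "S \<subseteq> D" "S \<noteq> {}" "x \<in> S \<Longrightarrow> y \<in> S \<Longrightarrow> \<exists>z\<in>S. le z x \<and> le z y"
  using assms unfolding filtered_def by blast+

lemma way_belowD:
  "way_below D le x y \<Longrightarrow> directed D le S \<Longrightarrow> is_sup D le S s \<Longrightarrow> le y s \<Longrightarrow> \<exists>t\<in>S. le x t"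
  unfolding way_below_def by blast

lemma is_sup_unique: "is_poset D le \<Longrightarrow> is_sup D le S a \<Longrightarrow> is_sup D le S b \<Longrightarrow> a = b"
  unfolding is_poset_def is_sup_def by blast

lemma is_inf_unique: "is_poset D le \<Longrightarrow> is_inf D le S a \<Longrightarrow> is_inf D le S b \<Longrightarrow> a = b"
  unfolding is_poset_def is_inf_def by blast

lemma is_poset_IX_le: "is_poset D IX_le"
  unfolding is_poset_def IX_le_def by blast

lemma directed_finite_upper_bound:
  assumes "is_poset D le" "directed D le S" "finite F" "F \<subseteq> S"
  shows "\<exists>t\<in>S. \<forall>f\<in>F. le f t"
  using assms(3,4)
proof (induction F rule: finite_induct)
  case empty
  then show ?case using assms(2) unfolding directed_def by blast
next
  case (insert f F)
  then obtain t where t: "t \<in> S" "\<forall>g\<in>F. le g t" by blast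
  obtain t' where t': "t' \<in> S" "le f t'" "le t t'"
    using assms(2) t(1) insert.prems unfolding directed_def by blast
  have "S \<subseteq> D" using assms(2) unfolding directed_def by blast
  then have "\<forall>g\<in>F. le g t'" using assms(1) t t' insert.prems unfolding is_poset_def by blast
  then show ?case using t' by blast
qed

section \<open>Order duality\<close>

lemma is_poset_conversep: "is_poset D le\<inverse>\<inverse> \<longleftrightarrow> is_poset D le"
  unfolding is_poset_def conversep_iff by blast

lemma directed_conversep: "directed D le\<inverse>\<inverse> S \<longleftrightarrow> filtered D le S"
  unfolding directed_def filtered_def conversep_iff ..

lemma filtered_conversep: "filtered D le\<inverse>\<inverse> S \<longleftrightarrow> directed D le S"
  unfolding directed_def filtered_def conversep_iff ..

lemma is_sup_conversep: "is_sup D le\<inverse>\<inverse> S s \<longleftrightarrow> is_inf D le S s"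
  unfolding is_sup_def is_inf_def conversep_iff ..

lemma is_inf_conversep: "is_inf D le\<inverse>\<inverse> S s \<longleftrightarrow> is_sup D le S s"
  unfolding is_sup_def is_inf_def conversep_iff ..

lemma cint_conversep: "cint X le\<inverse>\<inverse> a b = cint X le b a"
  unfolding cint_def by auto

lemma IX_conversep: "IX X le\<inverse>\<inverse> = IX X le"
  unfolding IX_def cint_conversep by auto

lemma ilo_conversep: "ilo X le\<inverse>\<inverse> = ihi X le"
  unfolding ilo_def ihi_def cint_conversep unfolding conversep_iff ..

lemma ihi_conversep: "ihi X le\<inverse>\<inverse> = ilo X le"
  unfolding ilo_def ihi_def cint_conversep unfolding conversep_iff ..

lemma ileft_conversep: "ileft X le\<inverse>\<inverse> = iright X le"
  unfolding ileft_def iright_def ilo_conversep cint_conversep ..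

lemma iright_conversep: "iright X le\<inverse>\<inverse> = ileft X le"
  unfolding ileft_def iright_def ihi_conversep cint_conversep ..

lemmas conversep_simps = is_poset_conversep directed_conversep filtered_conversep
  is_sup_conversep is_inf_conversep cint_conversep IX_conversep ilo_conversep ihi_conversep
  ileft_conversep iright_conversep conversep_iff

section \<open>Globally hyperbolic posets\<close>

locale globally_hyperbolic_poset =
  fixes X :: "'a set" and le :: "'a \<Rightarrow> 'a \<Rightarrow> bool"
  assumes globally_hyperbolic: "globally_hyperbolic X le"
begin

abbreviation wb where "wb \<equiv> way_below X le"

lemma bicontinuous: "bicontinuous X le"
  using globally_hyperbolic unfolding globally_hyperbolic_def by blast

lemma is_poset: "is_poset X le"
  using bicontinuous unfolding bicontinuous_def continuous_poset_def by blast

lemma poset_refl: "x \<in> X \<Longrightarrow> le x x"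
  using is_poset unfolding is_poset_def by blast

lemma poset_antisym: "x \<in> X \<Longrightarrow> y \<in> X \<Longrightarrow> le x y \<Longrightarrow> le y x \<Longrightarrow> x = y"
  using is_poset unfolding is_poset_def by blast

lemma poset_trans: "x \<in> X \<Longrightarrow> y \<in> X \<Longrightarrow> z \<in> X \<Longrightarrow> le x y \<Longrightarrow> le y z \<Longrightarrow> le x z"
  using is_poset unfolding is_poset_def by blast

lemma compact_cint: "a \<in> X \<Longrightarrow> b \<in> X \<Longrightarrow> le a b \<Longrightarrow> compact_wrt (interval_open X le) (cint X le a b)"
  using globally_hyperbolic unfolding globally_hyperbolic_def by blast

lemma way_below_iff_filtered:
  "x \<in> X \<Longrightarrow> y \<in> X \<Longrightarrow>
    wb x y \<longleftrightarrow> (\<forall>S. filtered X le S \<and> (\<exists>i. is_inf X le S i \<and> le i x) \<longrightarrow> (\<exists>s\<in>S. le s y))"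
  using bicontinuous unfolding bicontinuous_def by simp

lemma way_below_filteredD:
  "x \<in> X \<Longrightarrow> y \<in> X \<Longrightarrow> wb x y \<Longrightarrow> filtered X le S \<Longrightarrow> is_inf X le S i \<Longrightarrow> le i x \<Longrightarrow> \<exists>t\<in>S. le t y"
  using way_below_iff_filtered by blast

lemma way_below_imp_le:
  assumes "y \<in> X" "wb x y" shows "le x y"
proof -
  have "directed X le {y}" "is_sup X le {y} y"
    using poset_refl assms(1) unfolding directed_def is_sup_def by auto
  then show ?thesis using way_belowD[OF assms(2)] poset_refl[OF assms(1)] by blast
qed

lemma le_way_below_trans:
  assumes "x \<in> X" "y \<in> X" "le x y" "wb y z" shows "wb x z"
  unfolding way_below_def
proof (intro allI impI)
  fix S assume S: "directed X le S \<and> (\<exists>s. is_sup X le S s \<and> le z s)"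
  then obtain t where "t \<in> S" "le y t" using assms(4) unfolding way_below_def by blast
  moreover have "t \<in> X" using S \<open>t \<in> S\<close> unfolding directed_def by blast
  ultimately show "\<exists>t\<in>S. le x t" using assms poset_trans by blast
qed

lemma way_below_le_trans:
  assumes "y \<in> X" "z \<in> X" "wb x y" "le y z" shows "wb x z"
  unfolding way_below_def
proof (intro allI impI)
  fix S assume S: "directed X le S \<and> (\<exists>s. is_sup X le S s \<and> le z s)"
  then obtain s where s: "is_sup X le S s" "le z s" by blast
  then have "le y s" using assms poset_trans unfolding is_sup_def by blast
  then show "\<exists>t\<in>S. le x t" using way_belowD[OF assms(3)] S s(1) by blast
qed

lemma wb_up_filtered: "x \<in> X \<Longrightarrow> filtered X le (wb_up X le x)"
  using bicontinuous unfolding bicontinuous_def by blast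

lemma is_inf_wb_up: "x \<in> X \<Longrightarrow> is_inf X le (wb_up X le x) x"
  using bicontinuous unfolding bicontinuous_def by blast

lemma ex_directed_wb_down:
  assumes "x \<in> X" shows "\<exists>S. S \<subseteq> wb_down X le x \<and> directed X le S \<and> is_sup X le S x"
proof -
  have "\<exists>B\<subseteq>X. \<forall>x\<in>X. \<exists>S. S \<subseteq> B \<inter> wb_down X le x \<and> directed X le S \<and> is_sup X le S x"
    using bicontinuous unfolding bicontinuous_def continuous_poset_def by (elim conjE)
  then obtain B where "\<forall>x\<in>X. \<exists>S. S \<subseteq> B \<inter> wb_down X le x \<and> directed X le S \<and> is_sup X le S x"
    by (elim exE conjE)
  then obtain S where "S \<subseteq> B \<inter> wb_down X le x" "directed X le S" "is_sup X le S x"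
    using assms by (elim ballE exE conjE) auto
  then show ?thesis by auto
qed

lemma wb_down_directed:
  assumes x: "x \<in> X" shows "directed X le (wb_down X le x)"
  unfolding directed_def
proof (intro conjI ballI)
  obtain S where S: "S \<subseteq> wb_down X le x" "directed X le S" "is_sup X le S x"
    using ex_directed_wb_down[OF x] by (elim exE conjE)
  have SX: "S \<subseteq> X" using S(2) unfolding directed_def by (elim conjE)
  show "wb_down X le x \<subseteq> X" unfolding wb_down_def by (rule Collect_restrict)
  obtain s0 where "s0 \<in> S" using S(2) unfolding directed_def by auto
  then show "wb_down X le x \<noteq> {}" using S(1) by auto
  fix a b assume a: "a \<in> wb_down X le x" and b: "b \<in> wb_down X le x"
  have aX: "a \<in> X" and ax: "wb a x" and bX: "b \<in> X" and bx: "wb b x"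
    using a b unfolding wb_down_def by auto
  obtain s1 where s1: "s1 \<in> S" "le a s1" using way_belowD[OF ax S(2,3) poset_refl[OF x]] by (elim bexE)
  obtain s2 where s2: "s2 \<in> S" "le b s2" using way_belowD[OF bx S(2,3) poset_refl[OF x]] by (elim bexE)
  obtain s where s: "s \<in> S" "le s1 s" "le s2 s" using S(2) s1(1) s2(1) unfolding directed_def by blast
  have "le a s" using poset_trans[OF aX _ _ s1(2) s(2)] s1(1) s(1) SX by auto
  moreover have "le b s" using poset_trans[OF bX _ _ s2(2) s(3)] s2(1) s(1) SX by auto
  ultimately show "\<exists>s\<in>wb_down X le x. le a s \<and> le b s" using s(1) S(1) by auto
qed

lemma is_sup_wb_down:
  assumes x: "x \<in> X" shows "is_sup X le (wb_down X le x) x"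
  unfolding is_sup_def
proof (intro conjI ballI impI)
  show "x \<in> X" by fact
  show "le a x" if "a \<in> wb_down X le x" for a
    using that way_below_imp_le[OF x] unfolding wb_down_def by auto
  obtain S where S: "S \<subseteq> wb_down X le x" "directed X le S" "is_sup X le S x"
    using ex_directed_wb_down[OF x] by (elim exE conjE)
  show "le x u" if "u \<in> X" "\<forall>a\<in>wb_down X le x. le a u" for u
    using that S(1,3) unfolding is_sup_def by blast
qed

lemma ex_way_below:
  assumes "x \<in> X" shows "\<exists>a\<in>X. wb a x"
proof -
  obtain a where "a \<in> wb_down X le x"
    using wb_down_directed[OF assms] unfolding directed_def by auto
  then show ?thesis unfolding wb_down_def by auto
qed

lemma interpolation:
  assumes x: "x \<in> X" and z: "z \<in> X" and xz: "wb x z"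
  shows "\<exists>y\<in>X. wb x y \<and> wb y z"
proof -
  define D where "D = \<Union>(wb_down X le ` wb_down X le z)"
  have D_iff: "u \<in> D \<longleftrightarrow> (\<exists>v\<in>X. wb u v \<and> wb v z) \<and> u \<in> X" for u
    unfolding D_def wb_down_def by blast
  have "directed X le D"
    unfolding directed_def
  proof (intro conjI ballI)
    show "D \<subseteq> X" using D_iff by blast
    obtain v where "v \<in> wb_down X le z" using wb_down_directed[OF z] unfolding directed_def by blast
    then show "D \<noteq> {}"
      using wb_down_directed[of v] unfolding D_def directed_def wb_down_def by blast
    fix u1 u2 assume u1: "u1 \<in> D" and u2: "u2 \<in> D"
    obtain v1 v2 where v: "v1 \<in> X" "wb u1 v1" "wb v1 z" "v2 \<in> X" "wb u2 v2" "wb v2 z"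
      using u1 u2 D_iff by blast
    obtain v where "v \<in> wb_down X le z" "le v1 v" "le v2 v"
      using wb_down_directed[OF z] v unfolding directed_def wb_down_def by blast
    then have vX: "v \<in> X" and vz: "wb v z" and "wb u1 v" "wb u2 v"
      using v way_below_le_trans unfolding wb_down_def by blast+
    then obtain w where "w \<in> wb_down X le v" "le u1 w" "le u2 w"
      using wb_down_directed[OF vX] u1 u2 D_iff unfolding directed_def wb_down_def by blast
    then show "\<exists>w\<in>D. le u1 w \<and> le u2 w" using vX vz unfolding D_def wb_down_def by blast
  qed
  moreover have "is_sup X le D z"
    unfolding is_sup_def
  proof (intro conjI ballI impI)
    show "z \<in> X" by fact
    show "le u z" if u: "u \<in> D" for u
    proof -
      obtain v where v: "u \<in> X" "v \<in> X" "wb u v" "wb v z" using u D_iff by blast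
      then show ?thesis using poset_trans[OF v(1,2) z] way_below_imp_le[OF v(2,3)] way_below_imp_le[OF z v(4)]
        by blast
    qed
    fix u assume u: "u \<in> X" and ub: "\<forall>w\<in>D. le w u"
    have "le v u" if "v \<in> wb_down X le z" for v
      using is_sup_wb_down[of v] that u ub unfolding is_sup_def D_def wb_down_def by blast
    then show "le z u" using is_sup_wb_down[OF z] u unfolding is_sup_def by blast
  qed
  ultimately obtain t where t: "t \<in> D" "le x t" using way_belowD[OF xz _ _ poset_refl[OF z]] by blast
  then obtain v where "t \<in> X" "v \<in> X" "wb t v" "wb v z" using D_iff by blast
  then show ?thesis using le_way_below_trans[OF x _ t(2)] by blast
qed

lemma way_below_conversep:
  assumes "x \<in> X" "y \<in> X" shows "way_below X le\<inverse>\<inverse> x y \<longleftrightarrow> wb y x"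
proof -
  have "way_below X le\<inverse>\<inverse> x y \<longleftrightarrow>
      (\<forall>S. filtered X le S \<and> (\<exists>i. is_inf X le S i \<and> le i y) \<longrightarrow> (\<exists>s\<in>S. le s x))"
    unfolding way_below_def[of X "le\<inverse>\<inverse>"] directed_conversep is_sup_conversep conversep_iff ..
  then show ?thesis using way_below_iff_filtered[OF assms(2,1)] by simp
qed

lemma wb_up_conversep: "x \<in> X \<Longrightarrow> wb_up X le\<inverse>\<inverse> x = wb_down X le x"
  unfolding wb_up_def wb_down_def by (auto simp: way_below_conversep)

lemma interval_open_conversep: "interval_open X le\<inverse>\<inverse> = interval_open X le"
proof
  fix U
  have "(\<exists>a\<in>X. \<exists>b\<in>X. way_below X le\<inverse>\<inverse> a x \<and> way_below X le\<inverse>\<inverse> x b \<and>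
          {z\<in>X. way_below X le\<inverse>\<inverse> a z \<and> way_below X le\<inverse>\<inverse> z b} \<subseteq> U) \<longleftrightarrow>
        (\<exists>b\<in>X. \<exists>a\<in>X. wb b x \<and> wb x a \<and> {z\<in>X. wb b z \<and> wb z a} \<subseteq> U)" if x: "x \<in> X" for x
  proof -
    have "{z\<in>X. way_below X le\<inverse>\<inverse> a z \<and> way_below X le\<inverse>\<inverse> z b} = {z\<in>X. wb b z \<and> wb z a}"
      if "a \<in> X" "b \<in> X" for a b
      using that by (auto simp: way_below_conversep)
    then show ?thesis using x by (auto simp: way_below_conversep)
  qed
  then show "interval_open X le\<inverse>\<inverse> U \<longleftrightarrow> interval_open X le U"
    unfolding interval_open_def by blast
qed

lemma wb_down_conversep: "x \<in> X \<Longrightarrow> wb_down X le\<inverse>\<inverse> x = wb_up X le x"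
  unfolding wb_up_def wb_down_def by (auto simp: way_below_conversep)

lemma continuous_poset_conversep: "continuous_poset X le\<inverse>\<inverse>"
proof -
  have "\<exists>S. S \<subseteq> X \<inter> wb_down X le\<inverse>\<inverse> x \<and> directed X le\<inverse>\<inverse> S \<and> is_sup X le\<inverse>\<inverse> S x"
    if x: "x \<in> X" for x
  proof -
    have "wb_up X le x \<subseteq> X \<inter> wb_down X le\<inverse>\<inverse> x"
      unfolding wb_down_conversep[OF x] wb_up_def by blast
    then show ?thesis using wb_up_filtered[OF x] is_inf_wb_up[OF x]
      unfolding directed_conversep is_sup_conversep by blast
  qed
  then show ?thesis unfolding continuous_poset_def is_poset_conversep using is_poset by blast
qed

lemma globally_hyperbolic_conversep: "globally_hyperbolic X le\<inverse>\<inverse>"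
  unfolding globally_hyperbolic_def bicontinuous_def
proof (intro conjI ballI impI)
  show "continuous_poset X le\<inverse>\<inverse>" by (rule continuous_poset_conversep)
next
  fix x y assume x: "x \<in> X" and y: "y \<in> X"
  show "way_below X le\<inverse>\<inverse> x y \<longleftrightarrow>
      (\<forall>S. filtered X le\<inverse>\<inverse> S \<and> (\<exists>i. is_inf X le\<inverse>\<inverse> S i \<and> le\<inverse>\<inverse> i x) \<longrightarrow> (\<exists>s\<in>S. le\<inverse>\<inverse> s y))"
    using way_below_conversep[OF x y] unfolding way_below_def[of X le] filtered_conversep
      is_inf_conversep conversep_iff .
next
  fix x assume x: "x \<in> X"
  show "filtered X le\<inverse>\<inverse> (wb_up X le\<inverse>\<inverse> x)" "is_inf X le\<inverse>\<inverse> (wb_up X le\<inverse>\<inverse> x) x"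
    unfolding wb_up_conversep[OF x] filtered_conversep is_inf_conversep
    using wb_down_directed[OF x] is_sup_wb_down[OF x] .
next
  fix a b assume "a \<in> X" "b \<in> X" "le\<inverse>\<inverse> a b"
  then show "compact_wrt (interval_open X le\<inverse>\<inverse>) (cint X le\<inverse>\<inverse> a b)"
    unfolding interval_open_conversep cint_conversep conversep_iff by (simp add: compact_cint)
qed

lemma globally_hyperbolic_poset_conversep: "globally_hyperbolic_poset X le\<inverse>\<inverse>"
  by unfold_locales (rule globally_hyperbolic_conversep)

section \<open>Suprema of bounded directed sets\<close>

(* If not s \<sqsubseteq> x, pick a \<ll> s with not a \<sqsubseteq> x, then b \<gg> x with not a \<sqsubseteq> b:
   nothing way below b lies above s. *)
lemma interval_open_not_above:
  assumes s: "s \<in> X" shows "interval_open X le {x\<in>X. \<not> le s x}"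
  unfolding interval_open_def
proof (intro conjI ballI)
  show "{x\<in>X. \<not> le s x} \<subseteq> X" by blast
  fix x assume "x \<in> {x\<in>X. \<not> le s x}"
  then have x: "x \<in> X" and not_sx: "\<not> le s x" by auto
  obtain a where a: "a \<in> wb_down X le s" "\<not> le a x"
    using is_sup_wb_down[OF s] x not_sx unfolding is_sup_def by blast
  have aX: "a \<in> X" and as: "wb a s" using a(1) unfolding wb_down_def by auto
  obtain b where b: "b \<in> X" "wb x b" "\<not> le a b"
    using is_inf_wb_up[OF x] aX a(2) unfolding is_inf_def wb_up_def by blast
  obtain a' where a': "a' \<in> X" "wb a' x" using ex_way_below[OF x] by blast
  have "\<not> le s z" if z: "z \<in> X" "wb z b" for z
  proof
    assume "le s z"
    then have "le a z" using poset_trans[OF aX s z(1)] way_below_imp_le[OF s as] by blast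
    then show False using poset_trans[OF aX z(1) b(1)] way_below_imp_le[OF b(1) z(2)] b(3) by blast
  qed
  then have "{z\<in>X. wb a' z \<and> wb z b} \<subseteq> {x\<in>X. \<not> le s x}" by blast
  then show "\<exists>a\<in>X. \<exists>b\<in>X. wb a x \<and> wb x b \<and> {z\<in>X. wb a z \<and> wb z b} \<subseteq> {x\<in>X. \<not> le s x}"
    using a' b by blast
qed

lemma interval_open_not_below:
  assumes "s \<in> X" shows "interval_open X le {x\<in>X. \<not> le x s}"
proof -
  interpret dual: globally_hyperbolic_poset X "le\<inverse>\<inverse>" by (rule globally_hyperbolic_poset_conversep)
  show ?thesis using dual.interval_open_not_above[OF assms] by (simp add: interval_open_conversep)
qed

lemma directed_cluster_point:
  assumes S: "directed X le S" and u: "u \<in> X" and ub: "\<forall>s\<in>S. le s u"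
  shows "\<exists>c\<in>X. \<forall>V. interval_open X le V \<and> c \<in> V \<longrightarrow> (\<forall>s\<in>S. \<exists>t\<in>S. le s t \<and> t \<in> V)"
proof -
  have SX: "S \<subseteq> X" using S unfolding directed_def by blast
  obtain s0 where s0: "s0 \<in> S" using S unfolding directed_def by blast
  define K where "K = cint X le s0 u"
  have "\<exists>c\<in>K. \<forall>V. interval_open X le V \<and> c \<in> V \<longrightarrow> (\<forall>s\<in>S. \<exists>t\<in>S. le s t \<and> t \<in> V)"
  proof (rule ccontr)
    assume no_cluster: "\<not> ?thesis"
    define \<U> where "\<U> = {V. interval_open X le V \<and> (\<exists>s\<in>S. \<forall>t\<in>S. le s t \<longrightarrow> t \<notin> V)}"
    have "K \<subseteq> \<Union>\<U>"
    proof
      fix x assume "x \<in> K"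
      then obtain V s where "interval_open X le V" "x \<in> V" "s \<in> S" "\<forall>t\<in>S. le s t \<longrightarrow> t \<notin> V"
        using no_cluster by blast
      then show "x \<in> \<Union>\<U>" unfolding \<U>_def by blast
    qed
    moreover have "\<forall>V\<in>\<U>. interval_open X le V" unfolding \<U>_def by blast
    moreover have "compact_wrt (interval_open X le) K"
      unfolding K_def using compact_cint s0 SX u ub by blast
    ultimately obtain \<F> where \<F>: "\<F> \<subseteq> \<U>" "finite \<F>" "K \<subseteq> \<Union>\<F>"
      unfolding compact_wrt_def by meson
    have "\<forall>V\<in>\<F>. \<exists>s\<in>S. \<forall>t\<in>S. le s t \<longrightarrow> t \<notin> V" using \<F>(1) unfolding \<U>_def by blast
    then obtain sf where sf: "\<forall>V\<in>\<F>. sf V \<in> S \<and> (\<forall>t\<in>S. le (sf V) t \<longrightarrow> t \<notin> V)" by metis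
    have "finite (insert s0 (sf ` \<F>))" "insert s0 (sf ` \<F>) \<subseteq> S" using \<F>(2) sf s0 by auto
    then obtain t where t: "t \<in> S" "\<forall>f\<in>insert s0 (sf ` \<F>). le f t"
      using directed_finite_upper_bound[OF is_poset S] by blast
    have "t \<in> K" unfolding K_def cint_def using t SX ub by blast
    then obtain V where "V \<in> \<F>" "t \<in> V" using \<F>(3) by blast
    then show False using sf t by blast
  qed
  moreover have "K \<subseteq> X" unfolding K_def cint_def by blast
  ultimately show ?thesis by blast
qed

lemma directed_has_sup:
  assumes S: "directed X le S" and u: "u \<in> X" and ub: "\<forall>s\<in>S. le s u"
  shows "\<exists>c. is_sup X le S c"
proof -
  obtain c where c: "c \<in> X"
    and cluster: "\<forall>V. interval_open X le V \<and> c \<in> V \<longrightarrow> (\<forall>s\<in>S. \<exists>t\<in>S. le s t \<and> t \<in> V)"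
    using directed_cluster_point[OF assms] by (elim bexE)
  have SX: "S \<subseteq> X" using S unfolding directed_def by blast
  have "le s c" if s: "s \<in> S" for s
  proof (rule ccontr)
    assume "\<not> le s c"
    then have "c \<in> {x\<in>X. \<not> le s x}" using c by blast
    then obtain t where "t \<in> S" "le s t" "t \<in> {x\<in>X. \<not> le s x}"
      using cluster interval_open_not_above[of s] s SX by blast
    then show False by blast
  qed
  moreover have "le c v" if v: "v \<in> X" "\<forall>s\<in>S. le s v" for v
  proof (rule ccontr)
    assume "\<not> le c v"
    then have "c \<in> {x\<in>X. \<not> le x v}" using c by blast
    moreover obtain s0 where "s0 \<in> S" using S unfolding directed_def by blast
    ultimately obtain t where "t \<in> S" "t \<in> {x\<in>X. \<not> le x v}"
      using cluster interval_open_not_below[OF v(1)] by blast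
    then show False using v(2) by blast
  qed
  ultimately show ?thesis using c unfolding is_sup_def by blast
qed

lemma filtered_has_inf:
  assumes "filtered X le S" "l \<in> X" "\<forall>s\<in>S. le l s"
  shows "\<exists>c. is_inf X le S c"
proof -
  interpret dual: globally_hyperbolic_poset X "le\<inverse>\<inverse>" by (rule globally_hyperbolic_poset_conversep)
  have "\<exists>c. is_sup X le\<inverse>\<inverse> S c"
    by (rule dual.directed_has_sup) (use assms in \<open>auto simp: directed_conversep\<close>)
  then show ?thesis unfolding is_sup_conversep .
qed

section \<open>Intervals and their directed suprema\<close>

abbreviation ci where "ci \<equiv> cint X le"
abbreviation lo where "lo \<equiv> ilo X le"
abbreviation hi where "hi \<equiv> ihi X le"
abbreviation I where "I \<equiv> IX X le"
abbreviation Lf where "Lf \<equiv> ileft X le"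
abbreviation Rf where "Rf \<equiv> iright X le"

lemma ends_in_cint: "a \<in> X \<Longrightarrow> b \<in> X \<Longrightarrow> le a b \<Longrightarrow> a \<in> ci a b \<and> b \<in> ci a b"
  unfolding cint_def using poset_refl by auto

lemma cint_subset_iff:
  assumes "a \<in> X" "b \<in> X" "c \<in> X" "d \<in> X" "le c d"
  shows "ci c d \<subseteq> ci a b \<longleftrightarrow> le a c \<and> le d b"
proof
  assume "ci c d \<subseteq> ci a b"
  then show "le a c \<and> le d b" using ends_in_cint[of c d] assms unfolding cint_def by blast
next
  assume "le a c \<and> le d b"
  then show "ci c d \<subseteq> ci a b"
    unfolding cint_def using assms poset_trans[of a c] poset_trans[of _ d b] by blast
qed

lemma cint_eq_iff:
  assumes "a \<in> X" "b \<in> X" "c \<in> X" "d \<in> X" "le a b" "le c d"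
  shows "ci a b = ci c d \<longleftrightarrow> a = c \<and> b = d"
proof
  assume "ci a b = ci c d"
  then have "le c a \<and> le b d" "le a c \<and> le d b"
    using cint_subset_iff[of c d a b] cint_subset_iff[of a b c d] assms by auto
  then show "a = c \<and> b = d" using poset_antisym assms by blast
qed simp

lemma cint_singleton: "a \<in> X \<Longrightarrow> ci a a = {a}"
  unfolding cint_def using poset_refl poset_antisym by auto

lemma ilo_cint: assumes "a \<in> X" "b \<in> X" "le a b" shows "lo (ci a b) = a"
  unfolding ilo_def
proof (rule the_equality)
  show "a \<in> X \<and> (\<exists>b'\<in>X. le a b' \<and> ci a b = ci a b')" using assms by blast
  fix a' assume "a' \<in> X \<and> (\<exists>b'\<in>X. le a' b' \<and> ci a b = ci a' b')"
  then show "a' = a" using cint_eq_iff assms by blast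
qed

lemma ihi_cint: assumes "a \<in> X" "b \<in> X" "le a b" shows "hi (ci a b) = b"
  unfolding ihi_def
proof (rule the_equality)
  show "b \<in> X \<and> (\<exists>a'\<in>X. le a' b \<and> ci a b = ci a' b)" using assms by blast
  fix b' assume "b' \<in> X \<and> (\<exists>a'\<in>X. le a' b' \<and> ci a b = ci a' b')"
  then show "b' = b" using cint_eq_iff assms by blast
qed

lemma cint_in_IX: "a \<in> X \<Longrightarrow> b \<in> X \<Longrightarrow> le a b \<Longrightarrow> ci a b \<in> I"
  unfolding IX_def by blast

lemma IX_endpoints:
  assumes "S \<in> I" shows "lo S \<in> X" "hi S \<in> X" "le (lo S) (hi S)" "ci (lo S) (hi S) = S"
proof -
  obtain a b where "a \<in> X" "b \<in> X" "le a b" "S = ci a b" using assms unfolding IX_def by blast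
  then show "lo S \<in> X" "hi S \<in> X" "le (lo S) (hi S)" "ci (lo S) (hi S) = S"
    using ilo_cint ihi_cint by simp_all
qed

lemma IX_le_iff:
  assumes "S \<in> I" "T \<in> I"
  shows "IX_le S T \<longleftrightarrow> le (lo S) (lo T) \<and> le (hi T) (hi S)"
proof -
  have "IX_le S T \<longleftrightarrow> ci (lo T) (hi T) \<subseteq> ci (lo S) (hi S)"
    unfolding IX_le_def using IX_endpoints(4)[OF assms(1)] IX_endpoints(4)[OF assms(2)] by simp
  also have "\<dots> \<longleftrightarrow> le (lo S) (lo T) \<and> le (hi T) (hi S)"
    by (rule cint_subset_iff) (use IX_endpoints assms in auto)
  finally show ?thesis .
qed

lemma IX_directed_endpoints:
  assumes F: "directed I IX_le F"
  shows "directed X le (lo ` F)" "filtered X le (hi ` F)"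
proof -
  have FI: "F \<subseteq> I" using directedD(1)[OF F] .
  have sub: "lo ` F \<subseteq> X" "hi ` F \<subseteq> X" using FI IX_endpoints by auto
  have ne: "lo ` F \<noteq> {}" "hi ` F \<noteq> {}" using directedD(2)[OF F] by auto
  have up: "\<exists>h\<in>F. le (lo f) (lo h) \<and> le (lo g) (lo h) \<and> le (hi h) (hi f) \<and> le (hi h) (hi g)"
    if f: "f \<in> F" and g: "g \<in> F" for f g
  proof -
    obtain h where h: "h \<in> F" "IX_le f h" "IX_le g h" using directedD(3)[OF F f g] by blast
    have I3: "f \<in> I" "g \<in> I" "h \<in> I" using FI f g h(1) by auto
    have "le (lo f) (lo h) \<and> le (hi h) (hi f)" using IX_le_iff[OF I3(1,3)] h(2) by blast
    moreover have "le (lo g) (lo h) \<and> le (hi h) (hi g)" using IX_le_iff[OF I3(2,3)] h(3) by blast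
    ultimately show ?thesis using h(1) by blast
  qed
  show "directed X le (lo ` F)"
    unfolding directed_def
  proof (intro conjI ballI)
    fix x y assume "x \<in> lo ` F" "y \<in> lo ` F"
    then obtain f g where "f \<in> F" "g \<in> F" "x = lo f" "y = lo g" by blast
    then show "\<exists>z\<in>lo ` F. le x z \<and> le y z" using up[of f g] by blast
  qed (use sub ne in auto)
  show "filtered X le (hi ` F)"
    unfolding filtered_def
  proof (intro conjI ballI)
    fix x y assume "x \<in> hi ` F" "y \<in> hi ` F"
    then obtain f g where "f \<in> F" "g \<in> F" "x = hi f" "y = hi g" by blast
    then show "\<exists>z\<in>hi ` F. le z x \<and> le z y" using up[of f g] by blast
  qed (use sub ne in auto)
qed

lemma is_sup_IX_cint:
  assumes FI: "F \<subseteq> I" and l: "is_sup X le (lo ` F) l" and r: "is_inf X le (hi ` F) r" and lr: "le l r"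
  shows "is_sup I IX_le F (ci l r)"
proof -
  have lX: "l \<in> X" and rX: "r \<in> X" using l r unfolding is_sup_def is_inf_def by auto
  have lr_I: "ci l r \<in> I" using cint_in_IX[OF lX rX lr] .
  have ends: "lo (ci l r) = l" "hi (ci l r) = r" using ilo_cint ihi_cint lX rX lr by auto
  show ?thesis
    unfolding is_sup_def
  proof (intro conjI ballI impI)
    fix f assume f: "f \<in> F"
    have "le (lo f) l" using l f unfolding is_sup_def by blast
    moreover have "le r (hi f)" using r f unfolding is_inf_def by blast
    ultimately show "IX_le f (ci l r)" using IX_le_iff[of f "ci l r"] f FI lr_I ends by auto
  next
    fix w assume w: "w \<in> I" and ub: "\<forall>f\<in>F. IX_le f w"
    have "le (lo f) (lo w) \<and> le (hi w) (hi f)" if "f \<in> F" for f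
      using ub IX_le_iff[of f w] FI w that by auto
    then have "le l (lo w)" "le (hi w) r"
      using l r IX_endpoints(1,2)[OF w] unfolding is_sup_def is_inf_def by auto
    then show "IX_le (ci l r) w" using IX_le_iff[OF lr_I w] ends by simp
  qed (fact lr_I)
qed

lemma IX_directed_sup_endpoints:
  assumes F: "directed I IX_le F"
  shows "\<exists>l r. is_sup X le (lo ` F) l \<and> is_inf X le (hi ` F) r \<and> le l r"
proof -
  have FI: "F \<subseteq> I" using directedD(1)[OF F] .
  have lo_hi: "le (lo f) (hi g)" if f: "f \<in> F" and g: "g \<in> F" for f g
  proof -
    obtain h where h: "h \<in> F" "IX_le f h" "IX_le g h" using directedD(3)[OF F f g] by blast
    have I3: "f \<in> I" "g \<in> I" "h \<in> I" using FI f g h(1) by auto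
    have "le (lo f) (lo h)" using IX_le_iff[OF I3(1,3)] h(2) by blast
    moreover have "le (lo h) (hi h)" using IX_endpoints(3)[OF I3(3)] .
    moreover have "le (hi h) (hi g)" using IX_le_iff[OF I3(2,3)] h(3) by blast
    ultimately show ?thesis
      using poset_trans[of "lo f" "lo h" "hi h"] poset_trans[of "lo f" "hi h" "hi g"]
        IX_endpoints(1,2) I3 by blast
  qed
  obtain f0 where f0: "f0 \<in> F" using directedD(2)[OF F] by blast
  have f0I: "f0 \<in> I" using FI f0 by blast
  have "\<forall>s\<in>lo ` F. le s (hi f0)" using lo_hi f0 by blast
  then obtain l where l: "is_sup X le (lo ` F) l"
    using directed_has_sup[OF IX_directed_endpoints(1)[OF F] IX_endpoints(2)[OF f0I]] by blast
  have "\<forall>s\<in>hi ` F. le (lo f0) s" using lo_hi f0 by blast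
  then obtain r where r: "is_inf X le (hi ` F) r"
    using filtered_has_inf[OF IX_directed_endpoints(2)[OF F] IX_endpoints(1)[OF f0I]] by blast
  have "le l (hi g)" if g: "g \<in> F" for g
  proof -
    have "hi g \<in> X" using IX_endpoints(2) FI g by blast
    moreover have "\<forall>s\<in>lo ` F. le s (hi g)" using lo_hi g by blast
    ultimately show ?thesis using l unfolding is_sup_def by blast
  qed
  then have "le l r" using l r unfolding is_sup_def is_inf_def by blast
  then show ?thesis using l r by blast
qed

lemma IX_sup_endpoints:
  assumes F: "directed I IX_le F" and s: "is_sup I IX_le F s"
  shows "is_sup X le (lo ` F) (lo s)" "is_inf X le (hi ` F) (hi s)"
proof -
  obtain l r where lr: "is_sup X le (lo ` F) l" "is_inf X le (hi ` F) r" "le l r"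
    using IX_directed_sup_endpoints[OF F] by blast
  have "F \<subseteq> I" using F unfolding directed_def by blast
  then have "s = ci l r" using is_sup_IX_cint lr s is_sup_unique[OF is_poset_IX_le] by blast
  moreover have "l \<in> X" "r \<in> X" using lr unfolding is_sup_def is_inf_def by auto
  ultimately show "is_sup X le (lo ` F) (lo s)" "is_inf X le (hi ` F) (hi s)"
    using lr ilo_cint ihi_cint by simp_all
qed

lemma is_dcpo_IX: "is_dcpo I IX_le"
  unfolding is_dcpo_def
proof (intro allI impI)
  fix F assume F: "directed I IX_le F"
  then have "F \<subseteq> I" unfolding directed_def by blast
  then show "\<exists>s. is_sup I IX_le F s" using IX_directed_sup_endpoints[OF F] is_sup_IX_cint by blast
qed

lemma IX_product:
  assumes A: "directed X le A" and W: "filtered X le W" and AW: "\<And>u v. u \<in> A \<Longrightarrow> v \<in> W \<Longrightarrow> le u v"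
  shows "directed I IX_le {ci u v | u v. u \<in> A \<and> v \<in> W}"
    and "lo ` {ci u v | u v. u \<in> A \<and> v \<in> W} = A" and "hi ` {ci u v | u v. u \<in> A \<and> v \<in> W} = W"
proof -
  define F where "F = {ci u v | u v. u \<in> A \<and> v \<in> W}"
  have AX: "A \<subseteq> X" and WX: "W \<subseteq> X" using directedD(1)[OF A] filteredD(1)[OF W] .
  have ends: "lo (ci u v) = u" "hi (ci u v) = v" if "u \<in> A" "v \<in> W" for u v
    using ilo_cint ihi_cint AW[OF that] that AX WX by blast+
  have uv_I: "ci u v \<in> I" if "u \<in> A" "v \<in> W" for u v
    using cint_in_IX AW[OF that] that AX WX by blast
  obtain u0 v0 where u0: "u0 \<in> A" and v0: "v0 \<in> W" using directedD(2)[OF A] filteredD(2)[OF W] by blast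
  show "lo ` F = A"
  proof
    show "lo ` F \<subseteq> A" unfolding F_def using ends by auto
    show "A \<subseteq> lo ` F"
    proof
      fix u assume u: "u \<in> A"
      have "ci u v0 \<in> F" unfolding F_def using u v0 by blast
      then show "u \<in> lo ` F" using ends(1)[OF u v0] image_eqI by metis
    qed
  qed
  show "hi ` F = W"
  proof
    show "hi ` F \<subseteq> W" unfolding F_def using ends by auto
    show "W \<subseteq> hi ` F"
    proof
      fix v assume v: "v \<in> W"
      have "ci u0 v \<in> F" unfolding F_def using u0 v by blast
      then show "v \<in> hi ` F" using ends(2)[OF u0 v] image_eqI by metis
    qed
  qed
  show "directed I IX_le F"
    unfolding directed_def
  proof (intro conjI ballI)
    show "F \<subseteq> I" unfolding F_def using uv_I by blast
    show "F \<noteq> {}" unfolding F_def using u0 v0 by blast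
    fix x y assume "x \<in> F" "y \<in> F"
    then obtain u1 v1 u2 v2 where x: "x = ci u1 v1" "u1 \<in> A" "v1 \<in> W"
      and y: "y = ci u2 v2" "u2 \<in> A" "v2 \<in> W" unfolding F_def by blast
    obtain u where u: "u \<in> A" "le u1 u" "le u2 u" using directedD(3)[OF A x(2) y(2)] by blast
    obtain v where v: "v \<in> W" "le v v1" "le v v2" using filteredD(3)[OF W x(3) y(3)] by blast
    have "IX_le x (ci u v)"
      using IX_le_iff[OF uv_I[OF x(2,3)] uv_I[OF u(1) v(1)]] ends[OF x(2,3)] ends[OF u(1) v(1)] x(1) u v
      by simp
    moreover have "IX_le y (ci u v)"
      using IX_le_iff[OF uv_I[OF y(2,3)] uv_I[OF u(1) v(1)]] ends[OF y(2,3)] ends[OF u(1) v(1)] y(1) u v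
      by simp
    moreover have "ci u v \<in> F" unfolding F_def using u(1) v(1) by blast
    ultimately show "\<exists>z\<in>F. IX_le x z \<and> IX_le y z" by blast
  qed
qed

lemma IX_approximation:
  assumes c: "c \<in> X" and d: "d \<in> X" and cd: "le c d"
  shows "\<exists>F. directed I IX_le F \<and> is_sup I IX_le F (ci c d) \<and> (\<forall>f\<in>F. wb (lo f) c \<and> wb d (hi f))"
proof -
  define A where "A = wb_down X le c"
  define W where "W = wb_up X le d"
  have A: "directed X le A" "is_sup X le A c" unfolding A_def using wb_down_directed is_sup_wb_down c by auto
  have W: "filtered X le W" "is_inf X le W d" unfolding W_def using wb_up_filtered is_inf_wb_up d by auto
  have AW: "le u v" if u: "u \<in> A" and v: "v \<in> W" for u v
  proof -
    have uX: "u \<in> X" and vX: "v \<in> X" and uc: "le u c" and dv: "le d v"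
      using u v way_below_imp_le c unfolding A_def W_def wb_down_def wb_up_def by auto
    then show ?thesis using poset_trans[OF uX c d uc cd] poset_trans[OF uX d vX _ dv] by blast
  qed
  define F where "F = {ci u v | u v. u \<in> A \<and> v \<in> W}"
  note F = IX_product[OF A(1) W(1) AW, folded F_def]
  have "is_sup I IX_le F (ci c d)"
    using is_sup_IX_cint[OF directedD(1)[OF F(1)]] A(2) W(2) cd F(2,3) by simp
  moreover have "wb (lo f) c \<and> wb d (hi f)" if "f \<in> F" for f
    using that F(2,3) unfolding A_def W_def wb_down_def wb_up_def by blast
  ultimately show ?thesis using F(1) by blast
qed

lemma way_below_IX_cintI:
  assumes X4: "a \<in> X" "b \<in> X" "c \<in> X" "d \<in> X" and cd: "le c d" and ac: "wb a c" and db: "wb d b"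
  shows "way_below I IX_le (ci a b) (ci c d)"
  unfolding way_below_def
proof (intro allI impI)
  fix F assume "directed I IX_le F \<and> (\<exists>s. is_sup I IX_le F s \<and> IX_le (ci c d) s)"
  then obtain s where F: "directed I IX_le F" and s: "is_sup I IX_le F s" "IX_le (ci c d) s" by blast
  have FI: "F \<subseteq> I" using directedD(1)[OF F] .
  have sI: "s \<in> I" using s(1) unfolding is_sup_def by blast
  have cd_I: "ci c d \<in> I" using cint_in_IX[OF X4(3,4) cd] .
  have "le c (lo s)" "le (hi s) d"
    using IX_le_iff[OF cd_I sI] s(2) ilo_cint[OF X4(3,4) cd] ihi_cint[OF X4(3,4) cd] by simp_all
  have "wb a (lo s)" using way_below_le_trans[OF X4(3) IX_endpoints(1)[OF sI] ac \<open>le c (lo s)\<close>] .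
  then obtain f1 where f1: "f1 \<in> F" "le a (lo f1)"
    using way_belowD[OF _ IX_directed_endpoints(1)[OF F] IX_sup_endpoints(1)[OF F s(1)]
      poset_refl[OF IX_endpoints(1)[OF sI]]] by blast
  obtain f2 where f2: "f2 \<in> F" "le (hi f2) b"
    using way_below_filteredD[OF X4(4,2) db IX_directed_endpoints(2)[OF F] IX_sup_endpoints(2)[OF F s(1)]
      \<open>le (hi s) d\<close>] by blast
  obtain h where h: "h \<in> F" "IX_le f1 h" "IX_le f2 h" using directedD(3)[OF F f1(1) f2(1)] by blast
  have I3: "f1 \<in> I" "f2 \<in> I" "h \<in> I" using FI f1(1) f2(1) h(1) by auto
  have "le a (lo h)"
    using IX_le_iff[OF I3(1,3)] h(2) f1(2) poset_trans X4(1) IX_endpoints(1) I3 by blast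
  moreover have "le (hi h) b"
    using IX_le_iff[OF I3(2,3)] h(3) f2(2) poset_trans X4(2) IX_endpoints(2) I3 by blast
  moreover have "le a b"
  proof -
    have "le a d" using poset_trans[OF X4(1,3,4) way_below_imp_le[OF X4(3) ac] cd] .
    then show ?thesis using poset_trans[OF X4(1,4,2)] way_below_imp_le[OF X4(2) db] by blast
  qed
  ultimately have "IX_le (ci a b) h"
    using IX_le_iff[OF cint_in_IX[OF X4(1,2)] I3(3)] ilo_cint ihi_cint X4 by simp
  then show "\<exists>h\<in>F. IX_le (ci a b) h" using h(1) by blast
qed

lemma way_below_IX_cintD:
  assumes X4: "a \<in> X" "b \<in> X" "c \<in> X" "d \<in> X" and ab: "le a b" and cd: "le c d"
    and way_below: "way_below I IX_le (ci a b) (ci c d)"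
  shows "\<exists>u\<in>X. \<exists>v\<in>X. le a u \<and> wb u c \<and> wb d v \<and> le v b"
proof -
  obtain F where F: "directed I IX_le F" "is_sup I IX_le F (ci c d)"
    and approx: "\<forall>f\<in>F. wb (lo f) c \<and> wb d (hi f)"
    using IX_approximation[OF X4(3,4) cd] by blast
  obtain f where f: "f \<in> F" "IX_le (ci a b) f"
    using way_belowD[OF way_below F] by (auto simp: IX_le_def)
  have fI: "f \<in> I" using directedD(1)[OF F(1)] f(1) by blast
  have "le a (lo f) \<and> le (hi f) b"
    using IX_le_iff[OF cint_in_IX[OF X4(1,2) ab] fI] f(2) ilo_cint ihi_cint X4 ab by simp
  then show ?thesis using IX_endpoints(1,2)[OF fI] approx f(1) by blast
qed

lemma continuous_dcpo_IX: "continuous_dcpo I IX_le"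
  unfolding continuous_dcpo_def continuous_poset_def
proof (intro conjI exI[of _ I])
  show "is_poset I IX_le" by (rule is_poset_IX_le)
  show "\<forall>x\<in>I. \<exists>S. S \<subseteq> I \<inter> wb_down I IX_le x \<and> directed I IX_le S \<and> is_sup I IX_le S x"
  proof
    fix x assume x: "x \<in> I"
    note ends = IX_endpoints[OF x]
    obtain F where F: "directed I IX_le F" "is_sup I IX_le F (ci (lo x) (hi x))"
      and approx: "\<forall>f\<in>F. wb (lo f) (lo x) \<and> wb (hi x) (hi f)"
      using IX_approximation[OF ends(1-3)] by blast
    have FI: "F \<subseteq> I" using directedD(1)[OF F(1)] .
    have "F \<subseteq> wb_down I IX_le x"
    proof
      fix f assume f: "f \<in> F"
      then have fI: "f \<in> I" using FI by blast
      have "way_below I IX_le (ci (lo f) (hi f)) (ci (lo x) (hi x))"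
        using way_below_IX_cintI[OF IX_endpoints(1,2)[OF fI] ends(1-3)] approx f by blast
      then show "f \<in> wb_down I IX_le x" unfolding wb_down_def using IX_endpoints(4) fI x by simp
    qed
    then show "\<exists>S. S \<subseteq> I \<inter> wb_down I IX_le x \<and> directed I IX_le S \<and> is_sup I IX_le S x"
      using F FI ends(4) by auto
  qed
qed (simp_all add: is_dcpo_IX)

lemma wb_up_IX_nonempty_iff:
  assumes x: "x \<in> I" shows "wb_up I IX_le x \<noteq> {} \<longleftrightarrow> wb (lo x) (hi x)"
proof
  note ends = IX_endpoints[OF x]
  assume "wb_up I IX_le x \<noteq> {}"
  then obtain y where y: "y \<in> I" "way_below I IX_le x y" unfolding wb_up_def by blast
  note ends_y = IX_endpoints[OF y(1)]
  obtain u v where uv: "u \<in> X" "v \<in> X" "le (lo x) u" "wb u (lo y)" "wb (hi y) v" "le v (hi x)"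
    using way_below_IX_cintD[OF ends(1,2) ends_y(1,2) ends(3) ends_y(3)] y(2) ends(4) ends_y(4) by auto
  have "wb (lo x) (lo y)" using le_way_below_trans[OF ends(1) uv(1,3,4)] .
  then have "wb (lo x) (hi y)" using way_below_le_trans[OF ends_y(1,2)] ends_y(3) by blast
  moreover have "le (hi y) (hi x)"
    using way_below_imp_le[OF uv(2,5)] poset_trans[OF ends_y(2) uv(2) ends(2)] uv(6) by blast
  ultimately show "wb (lo x) (hi x)" using way_below_le_trans[OF ends_y(2) ends(2)] by blast
next
  note ends = IX_endpoints[OF x]
  assume "wb (lo x) (hi x)"
  then obtain e where e: "e \<in> X" "wb (lo x) e" "wb e (hi x)" using interpolation ends(1,2) by blast
  have "way_below I IX_le x (ci e e)"
    using way_below_IX_cintI[OF ends(1,2) e(1) e(1) poset_refl[OF e(1)] e(2,3)] ends(4) by simp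
  then have "ci e e \<in> wb_up I IX_le x"
    unfolding wb_up_def using cint_in_IX[OF e(1) e(1) poset_refl[OF e(1)]] by blast
  then show "wb_up I IX_le x \<noteq> {}" by blast
qed

section \<open>The interval domain axioms\<close>

lemma maxs_IX: "maxs I IX_le = (\<lambda>p. ci p p) ` X"
proof
  show "maxs I IX_le \<subseteq> (\<lambda>p. ci p p) ` X"
  proof
    fix m assume m: "m \<in> maxs I IX_le"
    then have mI: "m \<in> I" unfolding maxs_def by blast
    note ends = IX_endpoints[OF mI]
    have "ci (lo m) (lo m) \<subseteq> m"
      using cint_subset_iff[OF ends(1,2,1,1) poset_refl[OF ends(1)]] poset_refl[OF ends(1)] ends(3,4) by simp
    then have "ci (lo m) (lo m) = m"
      using m cint_in_IX[OF ends(1,1) poset_refl[OF ends(1)]] unfolding maxs_def IX_le_def by blast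
    then show "m \<in> (\<lambda>p. ci p p) ` X" using ends(1) by blast
  qed
  show "(\<lambda>p. ci p p) ` X \<subseteq> maxs I IX_le"
  proof
    fix m assume "m \<in> (\<lambda>p. ci p p) ` X"
    then obtain p where p: "p \<in> X" "m = ci p p" by blast
    have "y = m" if y: "y \<in> I" "IX_le m y" for y
    proof -
      have "lo y \<in> y" using ends_in_cint IX_endpoints[OF y(1)] by metis
      moreover have "y \<subseteq> {p}" using y(2) p cint_singleton unfolding IX_le_def by simp
      ultimately show ?thesis using p cint_singleton by auto
    qed
    then show "m \<in> maxs I IX_le"
      unfolding maxs_def using p cint_in_IX[OF p(1) p(1) poset_refl[OF p(1)]] by blast
  qed
qed

lemma is_inf_IX_pair:
  assumes X4: "a \<in> X" "b \<in> X" "c \<in> X" "d \<in> X" and ab: "le a b" and cd: "le c d"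
    and ac: "le a c" and bd: "le b d"
  shows "is_inf I IX_le {ci a b, ci c d} (ci a d)"
  unfolding is_inf_def
proof (intro conjI ballI impI)
  have ad: "le a d" using poset_trans[OF X4(1,2,4) ab bd] .
  show "ci a d \<in> I" using cint_in_IX[OF X4(1,4) ad] .
  fix x assume "x \<in> {ci a b, ci c d}"
  then show "IX_le (ci a d) x"
    unfolding IX_le_def using cint_subset_iff[of a d a b] cint_subset_iff[of a d c d]
      X4 ab cd ac bd ad poset_refl by auto
next
  have ad: "le a d" using poset_trans[OF X4(1,2,4) ab bd] .
  fix w assume w: "w \<in> I" and lb: "\<forall>x\<in>{ci a b, ci c d}. IX_le w x"
  note ends = IX_endpoints[OF w]
  have "ci a b \<subseteq> w" "ci c d \<subseteq> w" using lb unfolding IX_le_def by auto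
  then have "le (lo w) a" "le d (hi w)"
    using cint_subset_iff[OF ends(1,2) X4(1,2) ab] cint_subset_iff[OF ends(1,2) X4(3,4) cd] ends(4) by auto
  then have "ci a d \<subseteq> w" using cint_subset_iff[OF ends(1,2) X4(1,4) ad] ends(4) by auto
  then show "IX_le w (ci a d)" unfolding IX_le_def .
qed

lemma interval_poset_IX: "interval_poset I IX_le Lf Rf"
  unfolding interval_poset_def
proof (intro conjI ballI impI)
  show "is_poset I IX_le" by (rule is_poset_IX_le)
next
  fix x assume x: "x \<in> I"
  note ends = IX_endpoints[OF x]
  show "Lf x \<in> maxs I IX_le" "Rf x \<in> maxs I IX_le"
    unfolding maxs_IX ileft_def iright_def using ends(1,2) by auto
  show "is_inf I IX_le {Lf x, Rf x} x"
    using is_inf_IX_pair[OF ends(1,1,2,2) poset_refl[OF ends(1)] poset_refl[OF ends(2)] ends(3,3)] ends(4)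
    unfolding ileft_def iright_def by simp
next
  fix x y assume x: "x \<in> I" and y: "y \<in> I" and xy: "Rf x = Lf y"
  note ex = IX_endpoints[OF x] and ey = IX_endpoints[OF y]
  have eq: "hi x = lo y" using xy cint_singleton ex(2) ey(1) unfolding ileft_def iright_def by auto
  have ad: "le (lo x) (hi y)" using poset_trans[OF ex(1,2) ey(2) ex(3)] ey(3) eq by simp
  have "is_inf I IX_le {x, y} (ci (lo x) (hi y))"
    using is_inf_IX_pair[OF ex(1,2) ey(1,2) ex(3) ey(3)] ex(3,4) ey(3,4) eq by simp
  moreover have "Lf (ci (lo x) (hi y)) = Lf x" "Rf (ci (lo x) (hi y)) = Rf y"
    unfolding ileft_def iright_def using ilo_cint ihi_cint ex(1) ey(2) ad by simp_all
  ultimately show "\<exists>m. is_inf I IX_le {x, y} m \<and> Lf m = Lf x \<and> Rf m = Rf y" by blast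
next
  fix x p assume x: "x \<in> I" and p: "p \<in> maxs I IX_le" and xp: "IX_le x p"
  note ex = IX_endpoints[OF x]
  obtain q where q: "q \<in> X" "p = ci q q" using p unfolding maxs_IX by blast
  have "q \<in> x" using xp q ends_in_cint[OF q(1) q(1) poset_refl[OF q(1)]] unfolding IX_le_def by blast
  then have lq: "le (lo x) q" and qh: "le q (hi x)" using ex(4) unfolding cint_def by auto
  have "is_inf I IX_le {Lf x, p} (ci (lo x) q)"
    using is_inf_IX_pair[OF ex(1,1) q(1,1) poset_refl[OF ex(1)] poset_refl[OF q(1)] lq lq] q(2)
    unfolding ileft_def by simp
  moreover have "Lf (ci (lo x) q) = Lf x" "Rf (ci (lo x) q) = p"
    unfolding ileft_def iright_def using ilo_cint ihi_cint ex(1) q lq by simp_all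
  ultimately show "\<exists>m. is_inf I IX_le {Lf x, p} m \<and> Lf m = Lf x \<and> Rf m = p" by blast
  have "is_inf I IX_le {p, Rf x} (ci q (hi x))"
    using is_inf_IX_pair[OF q(1,1) ex(2,2) poset_refl[OF q(1)] poset_refl[OF ex(2)] qh qh] q(2)
    unfolding iright_def by simp
  moreover have "Lf (ci q (hi x)) = p" "Rf (ci q (hi x)) = Rf x"
    unfolding ileft_def iright_def using ilo_cint ihi_cint ex(2) q qh by simp_all
  ultimately show "\<exists>m. is_inf I IX_le {p, Rf x} m \<and> Lf m = p \<and> Rf m = Rf x" by blast
qed

lemma wb_up_IX_meet_left:
  assumes x: "x \<in> I" and p: "p \<in> wb_up I IX_le x \<inter> maxs I IX_le" and m: "is_inf I IX_le {Lf x, p} m"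
  shows "wb_up I IX_le m \<noteq> {}"
proof -
  note ends = IX_endpoints[OF x]
  obtain q where q: "q \<in> X" "p = ci q q" using p unfolding maxs_IX by blast
  have "way_below I IX_le (ci (lo x) (hi x)) (ci q q)" using p q ends(4) unfolding wb_up_def by simp
  then obtain u where "u \<in> X" "le (lo x) u" "wb u q"
    using way_below_IX_cintD[OF ends(1,2) q(1,1) ends(3) poset_refl[OF q(1)]] by blast
  then have lq: "wb (lo x) q" using le_way_below_trans[OF ends(1)] by blast
  have lq': "le (lo x) q" using way_below_imp_le[OF q(1) lq] .
  have "is_inf I IX_le {Lf x, p} (ci (lo x) q)"
    using is_inf_IX_pair[OF ends(1,1) q(1,1) poset_refl[OF ends(1)] poset_refl[OF q(1)] lq' lq'] q(2)
    unfolding ileft_def by simp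
  then have "m = ci (lo x) q" using is_inf_unique[OF is_poset_IX_le m] by blast
  then show ?thesis
    using wb_up_IX_nonempty_iff[OF cint_in_IX[OF ends(1) q(1) lq']] ilo_cint ihi_cint ends(1) q(1) lq' lq
    by simp
qed

lemma IX_sup_in_left_fibre:
  assumes S: "directed I IX_le S" "S \<subseteq> {z\<in>I. Lf z = p}" and s: "is_sup I IX_le S s"
  shows "Lf s = p"
proof -
  obtain z0 where z0: "z0 \<in> S" using directedD(2)[OF S(1)] by blast
  have z0I: "z0 \<in> I" using S(2) z0 by blast
  have "lo z = lo z0" if z: "z \<in> S" for z
  proof -
    have zI: "z \<in> I" using S(2) z by blast
    have "ci (lo z) (lo z) = ci (lo z0) (lo z0)" using S(2) z z0 unfolding ileft_def by auto
    then show ?thesis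
      using cint_singleton[OF IX_endpoints(1)[OF zI]] cint_singleton[OF IX_endpoints(1)[OF z0I]] by simp
  qed
  then have "lo ` S = {lo z0}" using z0 by blast
  moreover have "is_sup X le {lo z0} (lo z0)"
    using poset_refl IX_endpoints(1)[OF z0I] unfolding is_sup_def by auto
  ultimately have "lo s = lo z0"
    using is_sup_unique[OF is_poset IX_sup_endpoints(1)[OF S(1) s]] by simp
  then show "Lf s = p" using S(2) z0 unfolding ileft_def by auto
qed

lemma IX_sup_right_determined:
  assumes S: "directed I IX_le S" "is_sup I IX_le S s" and T: "directed I IX_le T" "is_sup I IX_le T t"
    and RT: "Rf ` T = Rf ` S"
  shows "Rf t = Rf s"
proof -
  have hi_Rf: "hi z = lo (Rf z)" if "z \<in> I" for z
    using ilo_cint[OF IX_endpoints(2,2)[OF that] poset_refl[OF IX_endpoints(2)[OF that]]]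
    unfolding iright_def by simp
  have SI: "S \<subseteq> I" and TI: "T \<subseteq> I" using directedD(1) S(1) T(1) by auto
  have "hi ` T = lo ` Rf ` T" using hi_Rf TI by force
  also have "\<dots> = lo ` Rf ` S" using RT by simp
  also have "\<dots> = hi ` S" using hi_Rf SI by force
  finally have "is_inf X le (hi ` S) (hi t)" using IX_sup_endpoints(2)[OF T] by simp
  then have "hi t = hi s" using is_inf_unique[OF is_poset _ IX_sup_endpoints(2)[OF S]] by blast
  then show ?thesis unfolding iright_def by simp
qed

lemma iright_eq_iff: "z \<in> I \<Longrightarrow> b \<in> X \<Longrightarrow> Rf z = ci b b \<longleftrightarrow> hi z = b"
  using cint_singleton IX_endpoints(2) unfolding iright_def by auto

lemma right_fibre_cint:
  assumes "z \<in> {z\<in>I. Rf z = ci b b}" "b \<in> X"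
  shows "ci (lo z) b = z" "lo z \<in> X" "le (lo z) b"
  using IX_endpoints iright_eq_iff assms by auto

lemma right_fibre_approximation:
  assumes b: "b \<in> X"
  shows "directed {z\<in>I. Rf z = ci b b} IX_le ((\<lambda>u. ci u b) ` wb_down X le b)"
    and "is_sup {z\<in>I. Rf z = ci b b} IX_le ((\<lambda>u. ci u b) ` wb_down X le b) (ci b b)"
proof -
  define P where "P = {z\<in>I. Rf z = ci b b}"
  define A where "A = wb_down X le b"
  have A: "directed X le A" "is_sup X le A b" unfolding A_def using wb_down_directed is_sup_wb_down b by auto
  have AX: "A \<subseteq> X" using directedD(1)[OF A(1)] .
  have Ab: "le u b" if "u \<in> A" for u
    using that way_below_imp_le[OF b] unfolding A_def wb_down_def by auto
  have cint_P: "ci u b \<in> P" if "u \<in> X" "le u b" for u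
    using iright_eq_iff cint_in_IX ihi_cint b that unfolding P_def by auto
  show "directed P IX_le ((\<lambda>u. ci u b) ` A)"
    unfolding directed_def
  proof (intro conjI ballI)
    show "(\<lambda>u. ci u b) ` A \<subseteq> P" using cint_P AX Ab by blast
    show "(\<lambda>u. ci u b) ` A \<noteq> {}" using directedD(2)[OF A(1)] by blast
    fix x z assume "x \<in> (\<lambda>u. ci u b) ` A" "z \<in> (\<lambda>u. ci u b) ` A"
    then obtain u1 u2 where u: "u1 \<in> A" "u2 \<in> A" "x = ci u1 b" "z = ci u2 b" by blast
    obtain u where u3: "u \<in> A" "le u1 u" "le u2 u" using directedD(3)[OF A(1) u(1,2)] by blast
    have "ci u b \<subseteq> ci u1 b" "ci u b \<subseteq> ci u2 b"
      using cint_subset_iff[of u1 b u b] cint_subset_iff[of u2 b u b] u u3 AX b Ab poset_refl by auto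
    then show "\<exists>w\<in>(\<lambda>u. ci u b) ` A. IX_le x w \<and> IX_le z w" using u u3(1) unfolding IX_le_def by blast
  qed
  show "is_sup P IX_le ((\<lambda>u. ci u b) ` A) (ci b b)"
    unfolding is_sup_def
  proof (intro conjI ballI impI)
    show "ci b b \<in> P" using cint_P b poset_refl by blast
    fix x assume "x \<in> (\<lambda>u. ci u b) ` A"
    then obtain u where "u \<in> A" "x = ci u b" by blast
    then show "IX_le x (ci b b)"
      using cint_subset_iff[of u b b b] AX b Ab poset_refl unfolding IX_le_def by auto
  next
    fix w assume w: "w \<in> P" and ub: "\<forall>x\<in>(\<lambda>u. ci u b) ` A. IX_le x w"
    note w_ends = right_fibre_cint[OF w[unfolded P_def] b]
    have "le u (lo w)" if "u \<in> A" for u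
    proof -
      have "w \<subseteq> ci u b" using ub that unfolding IX_le_def by blast
      then show ?thesis using cint_subset_iff[of u b "lo w" b] w_ends AX that b by auto
    qed
    then have "le b (lo w)" using A(2) w_ends(2) unfolding is_sup_def by blast
    then have "lo w = b" using poset_antisym w_ends(2,3) b by blast
    then show "IX_le (ci b b) w" using w_ends(1) unfolding IX_le_def by simp
  qed
qed

lemma right_fibre_sup_endpoints:
  assumes b: "b \<in> X" and T: "directed {z\<in>I. Rf z = ci b b} IX_le T"
    and s: "is_sup {z\<in>I. Rf z = ci b b} IX_le T s" "IX_le (ci b b) s"
  shows "directed X le (lo ` T)" "is_sup X le (lo ` T) b"
proof -
  define P where "P = {z\<in>I. Rf z = ci b b}"
  have TP: "T \<subseteq> P" using directedD(1)[OF T] unfolding P_def .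
  note ends = right_fibre_cint[OF _ b]
  have cint_P: "ci u b \<in> P" if "u \<in> X" "le u b" for u
    using iright_eq_iff cint_in_IX ihi_cint b that unfolding P_def by auto
  have "directed I IX_le T" using T TP unfolding directed_def P_def by blast
  then show lo_T: "directed X le (lo ` T)" using IX_directed_endpoints(1) by blast
  obtain e where e: "is_sup X le (lo ` T) e"
    using directed_has_sup[OF lo_T b] ends(3) TP unfolding P_def by blast
  have eX: "e \<in> X" and eb: "le e b" using e b ends(3) TP unfolding is_sup_def P_def by blast+
  have "IX_le z (ci e b)" if z: "z \<in> T" for z
  proof -
    have zP: "z \<in> {z\<in>I. Rf z = ci b b}" using TP z unfolding P_def by blast
    have "le (lo z) e" using e z unfolding is_sup_def by blast
    then have "ci e b \<subseteq> ci (lo z) b"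
      using cint_subset_iff[OF ends(2)[OF zP] b eX b eb] poset_refl[OF b] by simp
    then show ?thesis using ends(1)[OF zP] unfolding IX_le_def by simp
  qed
  then have "IX_le s (ci e b)" using s(1) cint_P[OF eX eb] unfolding is_sup_def P_def by blast
  then have "ci e b \<subseteq> {b}" using s(2) cint_singleton[OF b] unfolding IX_le_def by auto
  then have "e = b" using ends_in_cint[OF eX b eb] by auto
  then show "is_sup X le (lo ` T) b" using e by simp
qed

lemma way_below_right_fibre_iff:
  assumes y: "y \<in> I"
  shows "way_below {z\<in>I. Rf z = Rf y} IX_le y (Rf y) \<longleftrightarrow> wb (lo y) (hi y)"
proof -
  define a where "a = lo y"
  define b where "b = hi y"
  have a: "a \<in> X" and b: "b \<in> X" and y_eq: "y = ci a b"
    unfolding a_def b_def using IX_endpoints[OF y] by simp_all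
  have Rf_y: "Rf y = ci b b" unfolding b_def iright_def ..
  define P where "P = {z\<in>I. Rf z = ci b b}"
  note ends = right_fibre_cint[OF _ b]
  have "way_below P IX_le y (ci b b) \<longleftrightarrow> wb a b"
  proof
    assume "way_below P IX_le y (ci b b)"
    then have "\<exists>t\<in>(\<lambda>u. ci u b) ` wb_down X le b. IX_le y t"
      using way_belowD[OF _ right_fibre_approximation[OF b, folded P_def]] unfolding IX_le_def by blast
    then obtain u where u: "u \<in> wb_down X le b" "ci u b \<subseteq> ci a b" unfolding IX_le_def y_eq by blast
    then have "u \<in> X" "le a u" "wb u b"
      using cint_subset_iff[of a b u b] a b way_below_imp_le[OF b] unfolding wb_down_def by auto
    then show "wb a b" using le_way_below_trans[OF a] by blast
  next
    assume ab_wb: "wb a b"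
    show "way_below P IX_le y (ci b b)"
      unfolding way_below_def
    proof (intro allI impI)
      fix T assume "directed P IX_le T \<and> (\<exists>s. is_sup P IX_le T s \<and> IX_le (ci b b) s)"
      then obtain s where T: "directed P IX_le T" and s: "is_sup P IX_le T s" "IX_le (ci b b) s" by blast
      obtain z where z: "z \<in> T" "le a (lo z)"
        using way_belowD[OF ab_wb] right_fibre_sup_endpoints[OF b T[unfolded P_def] s[unfolded P_def]]
          poset_refl[OF b] by blast
      have zP: "z \<in> {z\<in>I. Rf z = ci b b}" using directedD(1)[OF T] z(1) unfolding P_def by blast
      have "ci (lo z) b \<subseteq> ci a b"
        using cint_subset_iff[OF a b ends(2)[OF zP] b ends(3)[OF zP]] z(2) poset_refl[OF b] by simp
      then show "\<exists>z\<in>T. IX_le y z" using z(1) ends(1)[OF zP] unfolding IX_le_def y_eq by auto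
    qed
  qed
  then show ?thesis unfolding P_def Rf_y a_def b_def .
qed

lemma wb_up_IX_nonempty_iff_right_fibres:
  assumes x: "x \<in> I"
  shows "wb_up I IX_le x \<noteq> {} \<longleftrightarrow>
    (\<forall>y\<in>I. Lf y = Lf x \<and> IX_le y x \<longrightarrow> way_below {z\<in>I. Rf z = Rf y} IX_le y (Rf y))"
proof -
  note ends = IX_endpoints[OF x]
  have "wb (lo x) (hi x) \<longleftrightarrow> (\<forall>y\<in>I. Lf y = Lf x \<and> IX_le y x \<longrightarrow> wb (lo y) (hi y))"
  proof
    assume wb_x: "wb (lo x) (hi x)"
    show "\<forall>y\<in>I. Lf y = Lf x \<and> IX_le y x \<longrightarrow> wb (lo y) (hi y)"
    proof (intro ballI impI)
      fix y assume y: "y \<in> I" and yx: "Lf y = Lf x \<and> IX_le y x"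
      note ends_y = IX_endpoints[OF y]
      have "lo y = lo x"
        using yx cint_singleton ends(1) ends_y(1) unfolding ileft_def by auto
      moreover have "le (hi x) (hi y)" using IX_le_iff[OF y x] yx by blast
      ultimately show "wb (lo y) (hi y)" using way_below_le_trans[OF ends(2) ends_y(2) wb_x] by simp
    qed
  qed (use x IX_le_def in auto)
  then show ?thesis using wb_up_IX_nonempty_iff[OF x] way_below_right_fibre_iff by auto
qed

lemma interval_open_singleton_preimage:
  assumes U: "scott_open I IX_le U" shows "interval_open X le {p\<in>X. ci p p \<in> U}"
  unfolding interval_open_def
proof (intro conjI ballI)
  show "{p\<in>X. ci p p \<in> U} \<subseteq> X" by blast
  fix p assume "p \<in> {p\<in>X. ci p p \<in> U}"
  then have p: "p \<in> X" "ci p p \<in> U" by auto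
  obtain F where F: "directed I IX_le F" "is_sup I IX_le F (ci p p)"
    and approx: "\<forall>f\<in>F. wb (lo f) p \<and> wb p (hi f)"
    using IX_approximation[OF p(1,1) poset_refl[OF p(1)]] by blast
  obtain f where f: "f \<in> F" "f \<in> U" using U F p(2) unfolding scott_open_def by blast
  have fI: "f \<in> I" using directedD(1)[OF F(1)] f(1) by blast
  note ends = IX_endpoints[OF fI]
  have "ci z z \<in> U" if z: "z \<in> X" "wb (lo f) z" "wb z (hi f)" for z
  proof -
    have "le (lo f) z" "le z (hi f)" using way_below_imp_le z ends(1,2) by blast+
    then have "IX_le f (ci z z)"
      using IX_le_iff[OF fI cint_in_IX[OF z(1,1) poset_refl[OF z(1)]]] ilo_cint ihi_cint z(1)
        poset_refl[OF z(1)] by simp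
    then show ?thesis
      using U f(2) cint_in_IX[OF z(1,1) poset_refl[OF z(1)]] unfolding scott_open_def by blast
  qed
  then show "\<exists>a\<in>X. \<exists>b\<in>X. wb a p \<and> wb p b \<and> {z\<in>X. wb a z \<and> wb z b} \<subseteq> {p\<in>X. ci p p \<in> U}"
    using ends(1,2) approx f(1) by blast
qed

lemma IX_maxs_above_compact:
  assumes x: "x \<in> I" shows "compact_wrt (scott_open I IX_le) {y\<in>maxs I IX_le. IX_le x y}"
  unfolding compact_wrt_def
proof (intro allI impI)
  fix \<U> assume \<U>: "(\<forall>U\<in>\<U>. scott_open I IX_le U) \<and> {y\<in>maxs I IX_le. IX_le x y} \<subseteq> \<Union>\<U>"
  note ends = IX_endpoints[OF x]
  have maxs_above: "{y\<in>maxs I IX_le. IX_le x y} = (\<lambda>p. ci p p) ` cint X le (lo x) (hi x)"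
  proof -
    have "IX_le x (ci p p) \<longleftrightarrow> p \<in> cint X le (lo x) (hi x)" if "p \<in> X" for p
      using IX_le_iff[OF x cint_in_IX[OF that that poset_refl[OF that]]] ilo_cint ihi_cint that poset_refl
      unfolding cint_def by auto
    then show ?thesis unfolding maxs_IX cint_def by auto
  qed
  define pre where "pre U = {p\<in>X. ci p p \<in> U}" for U
  have "cint X le (lo x) (hi x) \<subseteq> \<Union>(pre ` \<U>)" using \<U> maxs_above unfolding pre_def cint_def by blast
  moreover have "\<forall>V\<in>pre ` \<U>. interval_open X le V"
    using \<U> interval_open_singleton_preimage unfolding pre_def by blast
  ultimately obtain \<G> where \<G>: "\<G> \<subseteq> pre ` \<U>" "finite \<G>" "cint X le (lo x) (hi x) \<subseteq> \<Union>\<G>"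
    using compact_cint[OF ends(1-3)] unfolding compact_wrt_def by meson
  obtain \<F> where \<F>: "\<F> \<subseteq> \<U>" "finite \<F>" "\<G> = pre ` \<F>" using finite_subset_image[OF \<G>(2,1)] by blast
  have "{y\<in>maxs I IX_le. IX_le x y} \<subseteq> \<Union>\<F>"
  proof
    fix y assume "y \<in> {y\<in>maxs I IX_le. IX_le x y}"
    then obtain p where p: "p \<in> cint X le (lo x) (hi x)" "y = ci p p" using maxs_above by blast
    then obtain V where V: "V \<in> \<G>" "p \<in> V" using \<G>(3) by blast
    then obtain U where "U \<in> \<F>" "V = pre U" using \<F>(3) by blast
    then show "y \<in> \<Union>\<F>" using V(2) p(2) unfolding pre_def by blast
  qed
  then show "\<exists>\<F>\<subseteq>\<U>. finite \<F> \<and> {y\<in>maxs I IX_le. IX_le x y} \<subseteq> \<Union>\<F>" using \<F>(1,2) by blast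
qed

lemma interval_domain_IX: "interval_domain I IX_le Lf Rf"
proof -
  interpret dual: globally_hyperbolic_poset X "le\<inverse>\<inverse>" by (rule globally_hyperbolic_poset_conversep)
  note meet_right = dual.wb_up_IX_meet_left[unfolded conversep_simps]
  note sup_in_right_fibre = dual.IX_sup_in_left_fibre[unfolded conversep_simps]
  note sup_left_determined = dual.IX_sup_right_determined[unfolded conversep_simps]
  note left_fibres = dual.wb_up_IX_nonempty_iff_right_fibres[unfolded conversep_simps]
  show ?thesis
    unfolding interval_domain_def
  proof (intro conjI ballI allI impI)
    fix x p m assume x: "x \<in> I" and p: "p \<in> wb_up I IX_le x \<inter> maxs I IX_le"
    show "is_inf I IX_le {Lf x, p} m \<Longrightarrow> wb_up I IX_le m \<noteq> {}"
      by (rule wb_up_IX_meet_left[OF x p])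
    show "wb_up I IX_le m \<noteq> {}" if "is_inf I IX_le {p, Rf x} m"
    proof -
      have "is_inf I IX_le {Rf x, p} m" using that by (subst insert_commute)
      then show ?thesis by (rule meet_right[OF x p])
    qed
  next
    fix x assume x: "x \<in> I"
    show "wb_up I IX_le x \<noteq> {} \<longleftrightarrow>
        (\<forall>y\<in>I. Lf y = Lf x \<and> IX_le y x \<longrightarrow> way_below {z\<in>I. Rf z = Rf y} IX_le y (Rf y))"
      by (rule wb_up_IX_nonempty_iff_right_fibres[OF x])
    show "wb_up I IX_le x \<noteq> {} \<longleftrightarrow>
        (\<forall>y\<in>I. Rf y = Rf x \<and> IX_le y x \<longrightarrow> way_below {z\<in>I. Lf z = Lf y} IX_le y (Lf y))"
      by (rule left_fibres[OF x])
    show "compact_wrt (scott_open I IX_le) {y\<in>maxs I IX_le. IX_le x y}"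
      by (rule IX_maxs_above_compact[OF x])
  next
    fix p S s assume S: "directed I IX_le S \<and> S \<subseteq> {z\<in>I. Lf z = p} \<and> is_sup I IX_le S s"
    then show "Lf s = p" using IX_sup_in_left_fibre[of S p s] by blast
    fix q T t assume "directed I IX_le T \<and> T \<subseteq> {z\<in>I. Lf z = q} \<and> is_sup I IX_le T t \<and> Rf ` T = Rf ` S"
    then show "Rf t = Rf s" using IX_sup_right_determined[of S s T t] S by blast
  next
    fix q S s assume S: "directed I IX_le S \<and> S \<subseteq> {z\<in>I. Rf z = q} \<and> is_sup I IX_le S s"
    then show "Rf s = q" using sup_in_right_fibre[of S q s] by blast
    fix p T t assume "directed I IX_le T \<and> T \<subseteq> {z\<in>I. Rf z = p} \<and> is_sup I IX_le T t \<and> Lf ` T = Lf ` S"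
    then show "Lf t = Lf s" using sup_left_determined[of S s T t] S by blast
  qed (fact interval_poset_IX continuous_dcpo_IX)+
qed

end

section \<open>Morphisms and functoriality\<close>

lemma (in globally_hyperbolic_poset) Imap_id: "S \<in> I \<Longrightarrow> Imap X le X le id S = S"
  unfolding Imap_def using IX_endpoints(4) by simp

locale globally_hyperbolic_map =
  X: globally_hyperbolic_poset X leX + Y: globally_hyperbolic_poset Y leY
  for X :: "'a set" and leX and Y :: "'b set" and leY +
  fixes f :: "'a \<Rightarrow> 'b"
  assumes G_arrow: "G_arrow X leX Y leY f"
begin

lemma maps_into: "x \<in> X \<Longrightarrow> f x \<in> Y"
  using G_arrow unfolding G_arrow_def by blast

lemma monotone: "x \<in> X \<Longrightarrow> y \<in> X \<Longrightarrow> leX x y \<Longrightarrow> leY (f x) (f y)"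
  using G_arrow unfolding G_arrow_def by blast

lemma interval_open_preimage: "interval_open Y leY U \<Longrightarrow> interval_open X leX {x\<in>X. f x \<in> U}"
  using G_arrow unfolding G_arrow_def by blast

lemma globally_hyperbolic_map_conversep: "globally_hyperbolic_map X leX\<inverse>\<inverse> Y leY\<inverse>\<inverse> f"
proof (unfold_locales)
  show "G_arrow X leX\<inverse>\<inverse> Y leY\<inverse>\<inverse> f"
    using G_arrow unfolding G_arrow_def X.interval_open_conversep Y.interval_open_conversep by simp
qed (fact X.globally_hyperbolic_conversep Y.globally_hyperbolic_conversep)+

lemma preserves_directed_sup:
  assumes S: "directed X leX S" and s: "is_sup X leX S s"
  shows "is_sup Y leY (f ` S) (f s)"
proof -
  have SX: "S \<subseteq> X" using directedD(1)[OF S] .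
  have sX: "s \<in> X" using s unfolding is_sup_def by blast
  have fS: "directed Y leY (f ` S)"
    unfolding directed_def
  proof (intro conjI ballI)
    show "f ` S \<subseteq> Y" using SX maps_into by blast
    show "f ` S \<noteq> {}" using directedD(2)[OF S] by blast
    fix x y assume "x \<in> f ` S" "y \<in> f ` S"
    then obtain u v where uv: "u \<in> S" "v \<in> S" "x = f u" "y = f v" by blast
    then obtain w where "w \<in> S" "leX u w" "leX v w" using directedD(3)[OF S] by blast
    then show "\<exists>z\<in>f ` S. leY x z \<and> leY y z" using uv monotone SX by blast
  qed
  have ub: "\<forall>y\<in>f ` S. leY y (f s)" using s monotone SX sX unfolding is_sup_def by blast
  obtain t where t: "is_sup Y leY (f ` S) t" using Y.directed_has_sup[OF fS maps_into[OF sX] ub] by blast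
  have tY: "t \<in> Y" using t unfolding is_sup_def by blast
  have ts: "leY t (f s)" using t ub maps_into[OF sX] unfolding is_sup_def by blast
  have "leY (f s) t"
  proof (rule ccontr)
    assume not_st: "\<not> leY (f s) t"
    define V where "V = {x\<in>X. f x \<in> {y\<in>Y. \<not> leY y t}}"
    have "interval_open X leX V"
      unfolding V_def using interval_open_preimage Y.interval_open_not_below[OF tY] by blast
    moreover have "s \<in> V" unfolding V_def using sX maps_into not_st by blast
    ultimately obtain a b where ab: "a \<in> X" "b \<in> X" "X.wb a s" "X.wb s b"
      "{z\<in>X. X.wb a z \<and> X.wb z b} \<subseteq> V" unfolding interval_open_def by blast
    obtain a' where a': "a' \<in> X" "X.wb a a'" "X.wb a' s" using X.interpolation[OF ab(1) sX ab(3)] by blast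
    obtain z where z: "z \<in> S" "leX a' z" using way_belowD[OF a'(3) S s X.poset_refl[OF sX]] by blast
    have zX: "z \<in> X" using z(1) SX by blast
    have "X.wb a z" using X.way_below_le_trans[OF a'(1) zX a'(2) z(2)] .
    moreover have "X.wb z b" using X.le_way_below_trans[OF zX sX _ ab(4)] s z(1) unfolding is_sup_def by blast
    ultimately have "z \<in> V" using ab(5) zX by blast
    moreover have "leY (f z) t" using t z(1) unfolding is_sup_def by blast
    ultimately show False unfolding V_def by blast
  qed
  then have "t = f s" using Y.poset_antisym[OF tY maps_into[OF sX] ts] by blast
  then show ?thesis using t by simp
qed

lemma preserves_filtered_inf:
  assumes "filtered X leX S" "is_inf X leX S s"
  shows "is_inf Y leY (f ` S) (f s)"
proof -
  interpret dual: globally_hyperbolic_map X "leX\<inverse>\<inverse>" Y "leY\<inverse>\<inverse>" f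
    by (rule globally_hyperbolic_map_conversep)
  have "is_sup Y leY\<inverse>\<inverse> (f ` S) (f s)"
    by (rule dual.preserves_directed_sup) (use assms in \<open>simp_all add: directed_conversep is_sup_conversep\<close>)
  then show ?thesis unfolding is_sup_conversep .
qed

abbreviation Im where "Im \<equiv> Imap X leX Y leY f"

lemma Imap_endpoints:
  assumes S: "S \<in> X.I"
  shows "Im S \<in> Y.I" "Y.lo (Im S) = f (X.lo S)" "Y.hi (Im S) = f (X.hi S)"
proof -
  note ends = X.IX_endpoints[OF S]
  have "f (X.lo S) \<in> Y" "f (X.hi S) \<in> Y" "leY (f (X.lo S)) (f (X.hi S))"
    using maps_into monotone ends(1-3) by auto
  then show "Im S \<in> Y.I" "Y.lo (Im S) = f (X.lo S)" "Y.hi (Im S) = f (X.hi S)"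
    unfolding Imap_def using Y.cint_in_IX Y.ilo_cint Y.ihi_cint by simp_all
qed

lemma Imap_mono:
  assumes S: "S \<in> X.I" and T: "T \<in> X.I" and ST: "IX_le S T"
  shows "IX_le (Im S) (Im T)"
proof -
  have "leX (X.lo S) (X.lo T)" "leX (X.hi T) (X.hi S)" using X.IX_le_iff[OF S T] ST by blast+
  then have "leY (f (X.lo S)) (f (X.lo T))" "leY (f (X.hi T)) (f (X.hi S))"
    using monotone X.IX_endpoints(1,2)[OF S] X.IX_endpoints(1,2)[OF T] by blast+
  then show ?thesis using Y.IX_le_iff[OF Imap_endpoints(1)[OF S] Imap_endpoints(1)[OF T]]
      Imap_endpoints(2,3)[OF S] Imap_endpoints(2,3)[OF T] by simp
qed

lemma Imap_preserves_directed_sup: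
  assumes F: "directed X.I IX_le F" and s: "is_sup X.I IX_le F s"
  shows "directed Y.I IX_le (Im ` F)" "is_sup Y.I IX_le (Im ` F) (Im s)"
proof -
  have FI: "F \<subseteq> X.I" using directedD(1)[OF F] .
  show "directed Y.I IX_le (Im ` F)"
    unfolding directed_def
  proof (intro conjI ballI)
    show "Im ` F \<subseteq> Y.I" using Imap_endpoints(1) FI by blast
    show "Im ` F \<noteq> {}" using directedD(2)[OF F] by blast
    fix x y assume "x \<in> Im ` F" "y \<in> Im ` F"
    then obtain u v where uv: "u \<in> F" "v \<in> F" "x = Im u" "y = Im v" by blast
    then obtain w where "w \<in> F" "IX_le u w" "IX_le v w" using directedD(3)[OF F] by blast
    then show "\<exists>z\<in>Im ` F. IX_le x z \<and> IX_le y z" using uv Imap_mono FI by blast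
  qed
  have sI: "s \<in> X.I" using s unfolding is_sup_def by blast
  have ImF: "Im ` F \<subseteq> Y.I" using Imap_endpoints(1) FI by blast
  have "Y.lo ` Im ` F = f ` X.lo ` F" "Y.hi ` Im ` F = f ` X.hi ` F"
    using Imap_endpoints(2,3) FI by (force simp: image_image)+
  moreover have "is_sup Y leY (f ` X.lo ` F) (f (X.lo s))"
    using preserves_directed_sup[OF X.IX_directed_endpoints(1)[OF F] X.IX_sup_endpoints(1)[OF F s]] .
  moreover have "is_inf Y leY (f ` X.hi ` F) (f (X.hi s))"
    using preserves_filtered_inf[OF X.IX_directed_endpoints(2)[OF F] X.IX_sup_endpoints(2)[OF F s]] .
  moreover have "leY (f (X.lo s)) (f (X.hi s))"
    using Y.IX_endpoints(3)[OF Imap_endpoints(1)[OF sI]] Imap_endpoints(2,3)[OF sI] by simp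
  ultimately show "is_sup Y.I IX_le (Im ` F) (Im s)"
    unfolding Imap_def[of X leX Y leY f s] using Y.is_sup_IX_cint[OF ImF] by simp
qed

lemma scott_continuous_Imap: "scott_continuous X.I IX_le Y.I IX_le Im"
  unfolding scott_continuous_def
proof (intro conjI allI impI)
  show "Im ` X.I \<subseteq> Y.I" using Imap_endpoints(1) by blast
  fix U assume U: "scott_open Y.I IX_le U"
  show "scott_open X.I IX_le {x\<in>X.I. Im x \<in> U}"
    unfolding scott_open_def
  proof (intro conjI ballI allI impI)
    fix x y assume x: "x \<in> {x\<in>X.I. Im x \<in> U}" and y: "y \<in> X.I" and xy: "IX_le x y"
    then have "IX_le (Im x) (Im y)" using Imap_mono by blast
    then show "y \<in> {x\<in>X.I. Im x \<in> U}" using U x y Imap_endpoints(1)[OF y] unfolding scott_open_def by blast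
  next
    fix F s assume "directed X.I IX_le F \<and> is_sup X.I IX_le F s \<and> s \<in> {x\<in>X.I. Im x \<in> U}"
    then have F: "directed X.I IX_le F" and s: "is_sup X.I IX_le F s" and sU: "Im s \<in> U" by auto
    then have "Im ` F \<inter> U \<noteq> {}" using U Imap_preserves_directed_sup[OF F s] unfolding scott_open_def by blast
    then show "F \<inter> {x\<in>X.I. Im x \<in> U} \<noteq> {}" using directedD(1)[OF F] by blast
  qed blast
qed

lemma IN_arrow_Imap: "IN_arrow X.I IX_le X.Lf X.Rf Y.I IX_le Y.Lf Y.Rf Im"
  unfolding IN_arrow_def
proof (intro conjI ballI)
  show "scott_continuous X.I IX_le Y.I IX_le Im" by (rule scott_continuous_Imap)
  fix x assume x: "x \<in> X.I"
  note ends = X.IX_endpoints[OF x]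
  show "Im (X.Lf x) = Y.Lf (Im x)" "Im (X.Rf x) = Y.Rf (Im x)"
    unfolding ileft_def iright_def Imap_def[of X leX Y leY f "X.ci _ _"]
    using X.ilo_cint X.ihi_cint X.poset_refl ends Imap_endpoints[OF x] by simp_all
qed

lemma Imap_comp: "S \<in> X.I \<Longrightarrow> Imap X leX Z leZ (g \<circ> f) S = Imap Y leY Z leZ g (Im S)"
  using Imap_endpoints(2,3) unfolding Imap_def[of Y leY Z leZ g] by (simp add: Imap_def)

end

theorem mainTheorem14:
  shows "(\<forall>(X::'a set) le. globally_hyperbolic X le \<longrightarrow>
            interval_domain (IX X le) IX_le (ileft X le) (iright X le))
       \<and> (\<forall>(X::'a set) leX (Y::'b set) leY f.
            globally_hyperbolic X leX \<and> globally_hyperbolic Y leY \<and> G_arrow X leX Y leY f \<longrightarrow>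
            (\<forall>S\<in>IX X leX. Imap X leX Y leY f S \<in> IX Y leY) \<and>
            IN_arrow (IX X leX) IX_le (ileft X leX) (iright X leX)
                     (IX Y leY) IX_le (ileft Y leY) (iright Y leY) (Imap X leX Y leY f))
       \<and> (\<forall>(X::'a set) le. globally_hyperbolic X le \<longrightarrow>
            (\<forall>S\<in>IX X le. Imap X le X le id S = S))
       \<and> (\<forall>(X::'a set) leX (Y::'b set) leY (Z::'c set) leZ f g.
            globally_hyperbolic X leX \<and> globally_hyperbolic Y leY \<and> globally_hyperbolic Z leZ \<and>
            G_arrow X leX Y leY f \<and> G_arrow Y leY Z leZ g \<longrightarrow>
            (\<forall>S\<in>IX X leX. Imap X leX Z leZ (g \<circ> f) S = Imap Y leY Z leZ g (Imap X leX Y leY f S)))"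
proof (intro conjI allI impI ballI)
  fix X :: "'a set" and le
  assume "globally_hyperbolic X le"
  then interpret globally_hyperbolic_poset X le by unfold_locales
  show "interval_domain (IX X le) IX_le (ileft X le) (iright X le)" by (rule interval_domain_IX)
  show "Imap X le X le id S = S" if "S \<in> IX X le" for S using Imap_id that .
next
  fix X :: "'a set" and leX and Y :: "'b set" and leY f
  assume "globally_hyperbolic X leX \<and> globally_hyperbolic Y leY \<and> G_arrow X leX Y leY f"
  then interpret globally_hyperbolic_map X leX Y leY f by unfold_locales blast+
  show "Imap X leX Y leY f S \<in> IX Y leY" if "S \<in> IX X leX" for S using Imap_endpoints(1) that .
  show "IN_arrow (IX X leX) IX_le (ileft X leX) (iright X leX)
      (IX Y leY) IX_le (ileft Y leY) (iright Y leY) (Imap X leX Y leY f)" by (rule IN_arrow_Imap)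
next
  fix X :: "'a set" and leX and Y :: "'b set" and leY and Z :: "'c set" and leZ f g S
  assume "globally_hyperbolic X leX \<and> globally_hyperbolic Y leY \<and> globally_hyperbolic Z leZ \<and>
      G_arrow X leX Y leY f \<and> G_arrow Y leY Z leZ g"
  then interpret globally_hyperbolic_map X leX Y leY f by unfold_locales blast+
  show "S \<in> IX X leX \<Longrightarrow> Imap X leX Z leZ (g \<circ> f) S = Imap Y leY Z leZ g (Imap X leX Y leY f S)"
    by (rule Imap_comp)
qed

end
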